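(* Let $k$ be an infinite field, $D$ a division algebra with $k$ contained in its centre, $n\ge 1$, $A=M_n(D)$, and let $B\subseteq A$ be a dense subalgebra containing $k$. Let $m\ge 1$, let $W=M_{n\times m}(D)$, regarded as a left $A$-module via matrix multiplication, and let $V\subseteq W$ be a $B$-submodule with $AV=W$. Write $m=nq+r$ with $0\le r<n$. Then there is an $A$-module automorphism $\sigma$ of $W$ such that $\sigma(V)$ contains the $q$ matrices $$E_1=(I\;0\;\cdots\;0\;0'),\quad E_2=(0\;I\;\cdots\;0\;0'),\ \dots,\ E_q=(0\;0\;\cdots\;I\;0')$$ and a matrix of the form $(Y_1\;Y_2\;\cdots\;Y_q\;Y')$, where $I$ is the $n\times n$ identity matrix, $0$ the $n\times n$ zero matrix, $0'$ the $n\times r$ zero matrix, $Y_1,\dots,Y_q$ are $n\times n$ matrices over $D$, and $Y'$ is an $n\times r$ matrix over $D$ of rank $r$. (If $r=0$ the blocks $0'$, $Y'$ are empty, and then $\sigma(V)$ contains an $A$-basis of $W\cong A^q$.)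
   Context: A subring $B$ of a ring $A$ is called dense in $A$ if every simple left $A$-module $U$ is also simple as a $B$-$\mathrm{End}_A(U)$-bimodule. The $A$-module automorphisms of $W=M_{n\times m}(D)$ are the maps $X\mapsto XT$ with $T\in GL_m(D)$. *)

theory Defs
  imports "Jordan_Normal_Form.Matrix"
begin

text \<open>D is a division ring (type 'a). Matrices over D are JNF matrices; A = M_n(D) is
  carrier_mat n n, and W = M_{n x m}(D) is carrier_mat n m.\<close>

definition central_subfield :: "'a::division_ring set \<Rightarrow> bool" where
  "central_subfield k \<longleftrightarrow>
     0 \<in> k \<and> 1 \<in> k \<and>
     (\<forall>x\<in>k. \<forall>y\<in>k. x + y \<in> k \<and> x * y \<in> k) \<and>
     (\<forall>x\<in>k. - x \<in> k) \<and> (\<forall>x\<in>k. x \<noteq> 0 \<longrightarrow> inverse x \<in> k) \<and>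
     (\<forall>c\<in>k. \<forall>d. c * d = d * c)"

definition k_subalgebra :: "nat \<Rightarrow> 'a::division_ring set \<Rightarrow> 'a mat set \<Rightarrow> bool" where
  "k_subalgebra n k B \<longleftrightarrow>
     B \<subseteq> carrier_mat n n \<and> 1\<^sub>m n \<in> B \<and>
     (\<forall>x\<in>B. \<forall>y\<in>B. x + y \<in> B \<and> x * y \<in> B) \<and> (\<forall>x\<in>B. - x \<in> B) \<and>
     (\<forall>c\<in>k. c \<cdot>\<^sub>m 1\<^sub>m n \<in> B)"

definition left_module ::
  "nat \<Rightarrow> 'u set \<Rightarrow> ('u \<Rightarrow> 'u \<Rightarrow> 'u) \<Rightarrow> 'u \<Rightarrow> ('a::division_ring mat \<Rightarrow> 'u \<Rightarrow> 'u) \<Rightarrow> bool" where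
  "left_module n U pl z0 act \<longleftrightarrow>
     z0 \<in> U \<and>
     (\<forall>x\<in>U. \<forall>y\<in>U. pl x y \<in> U) \<and>
     (\<forall>x\<in>U. \<forall>y\<in>U. \<forall>z\<in>U. pl (pl x y) z = pl x (pl y z)) \<and>
     (\<forall>x\<in>U. \<forall>y\<in>U. pl x y = pl y x) \<and>
     (\<forall>x\<in>U. pl z0 x = x) \<and>
     (\<forall>x\<in>U. \<exists>y\<in>U. pl x y = z0) \<and>
     (\<forall>a\<in>carrier_mat n n. \<forall>x\<in>U. act a x \<in> U) \<and>
     (\<forall>a\<in>carrier_mat n n. \<forall>x\<in>U. \<forall>y\<in>U. act a (pl x y) = pl (act a x) (act a y)) \<and>
     (\<forall>a\<in>carrier_mat n n. \<forall>b\<in>carrier_mat n n. \<forall>x\<in>U. act (a + b) x = pl (act a x) (act b x)) \<and>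
     (\<forall>a\<in>carrier_mat n n. \<forall>b\<in>carrier_mat n n. \<forall>x\<in>U. act (a * b) x = act a (act b x)) \<and>
     (\<forall>x\<in>U. act (1\<^sub>m n) x = x)"

definition simple_module ::
  "nat \<Rightarrow> 'u set \<Rightarrow> ('u \<Rightarrow> 'u \<Rightarrow> 'u) \<Rightarrow> 'u \<Rightarrow> ('a::division_ring mat \<Rightarrow> 'u \<Rightarrow> 'u) \<Rightarrow> bool" where
  "simple_module n U pl z0 act \<longleftrightarrow>
     left_module n U pl z0 act \<and> U \<noteq> {z0} \<and>
     (\<forall>S. S \<subseteq> U \<and> z0 \<in> S \<and> (\<forall>x\<in>S. \<forall>y\<in>S. pl x y \<in> S) \<and>
          (\<forall>a\<in>carrier_mat n n. \<forall>x\<in>S. act a x \<in> S)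
        \<longrightarrow> S = {z0} \<or> S = U)"

definition module_endo ::
  "nat \<Rightarrow> 'u set \<Rightarrow> ('u \<Rightarrow> 'u \<Rightarrow> 'u) \<Rightarrow> ('a::division_ring mat \<Rightarrow> 'u \<Rightarrow> 'u) \<Rightarrow> ('u \<Rightarrow> 'u) \<Rightarrow> bool" where
  "module_endo n U pl act f \<longleftrightarrow>
     f ` U \<subseteq> U \<and> (\<forall>x\<in>U. \<forall>y\<in>U. f (pl x y) = pl (f x) (f y)) \<and>
     (\<forall>a\<in>carrier_mat n n. \<forall>x\<in>U. f (act a x) = act a (f x))"

text \<open>U is simple as a B-End_A(U)-bimodule: its only sub-bimodules
  (additive subgroups stable under B and under End_A(U)) are 0 and U.
  (Stability under additive inverses follows from -1 \<in> B.)\<close>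
definition simple_bimodule ::
  "nat \<Rightarrow> 'a::division_ring mat set \<Rightarrow> 'u set \<Rightarrow> ('u \<Rightarrow> 'u \<Rightarrow> 'u) \<Rightarrow> 'u \<Rightarrow> ('a mat \<Rightarrow> 'u \<Rightarrow> 'u) \<Rightarrow> bool" where
  "simple_bimodule n B U pl z0 act \<longleftrightarrow>
     U \<noteq> {z0} \<and>
     (\<forall>S. S \<subseteq> U \<and> z0 \<in> S \<and> (\<forall>x\<in>S. \<forall>y\<in>S. pl x y \<in> S) \<and>
          (\<forall>b\<in>B. \<forall>x\<in>S. act b x \<in> S) \<and>
          (\<forall>f. module_endo n U pl act f \<longrightarrow> (\<forall>x\<in>S. f x \<in> S))
        \<longrightarrow> S = {z0} \<or> S = U)"

text \<open>Every simple A-module is cyclic, hence isomorphic to A/L for a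
  maximal left ideal L, whose elements (cosets) are sets of matrices; so it suffices
  (and is equivalent) to quantify over modules whose carrier lies in 'a mat set.\<close>
definition dense_in :: "nat \<Rightarrow> 'a::division_ring mat set \<Rightarrow> bool" where
  "dense_in n B \<longleftrightarrow>
     (\<forall>(U :: 'a mat set set) pl z0 act.
        simple_module n U pl z0 act \<longrightarrow> simple_bimodule n B U pl z0 act)"

definition B_submodule :: "nat \<Rightarrow> nat \<Rightarrow> 'a::division_ring mat set \<Rightarrow> 'a mat set \<Rightarrow> bool" where
  "B_submodule n m B V \<longleftrightarrow>
     V \<subseteq> carrier_mat n m \<and> 0\<^sub>m n m \<in> V \<and>
     (\<forall>x\<in>V. \<forall>y\<in>V. x + y \<in> V) \<and> (\<forall>x\<in>V. - x \<in> V) \<and>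
     (\<forall>b\<in>B. \<forall>x\<in>V. b * x \<in> V)"

inductive_set A_span :: "nat \<Rightarrow> nat \<Rightarrow> 'a::division_ring mat set \<Rightarrow> 'a mat set"
  for n m :: nat and V :: "'a mat set" where
  zero: "0\<^sub>m n m \<in> A_span n m V"
| step: "a \<in> carrier_mat n n \<Longrightarrow> v \<in> V \<Longrightarrow> x \<in> A_span n m V \<Longrightarrow> a * v + x \<in> A_span n m V"

definition A_module_aut :: "nat \<Rightarrow> nat \<Rightarrow> ('a::division_ring mat \<Rightarrow> 'a mat) \<Rightarrow> bool" where
  "A_module_aut n m \<sigma> \<longleftrightarrow>
     bij_betw \<sigma> (carrier_mat n m) (carrier_mat n m) \<and>
     (\<forall>X\<in>carrier_mat n m. \<forall>Y\<in>carrier_mat n m. \<sigma> (X + Y) = \<sigma> X + \<sigma> Y) \<and>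
     (\<forall>a\<in>carrier_mat n n. \<forall>X\<in>carrier_mat n m. \<sigma> (a * X) = a * \<sigma> X)"

definition cols_indep :: "'a::division_ring mat \<Rightarrow> nat set \<Rightarrow> bool" where
  "cols_indep M S \<longleftrightarrow>
     (\<forall>c :: nat \<Rightarrow> 'a. (\<forall>i<dim_row M. (\<Sum>j\<in>S. M $$ (i, j) * c j) = 0) \<longrightarrow> (\<forall>j\<in>S. c j = 0))"

definition mat_rank :: "'a::division_ring mat \<Rightarrow> nat" where
  "mat_rank M = Max {card S | S. S \<subseteq> {0..<dim_col M} \<and> cols_indep M S}"

text \<open>E_j (0-based j < q): n x m matrix with the identity in the j-th n x n block.\<close>
definition E_block :: "nat \<Rightarrow> nat \<Rightarrow> nat \<Rightarrow> 'a::division_ring mat" where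
  "E_block n m j = mat n m (\<lambda>(i, c). if c = j * n + i then 1 else 0)"

definition tail_block :: "nat \<Rightarrow> nat \<Rightarrow> 'a::division_ring mat \<Rightarrow> 'a mat" where
  "tail_block q r Y = mat (dim_row Y) r (\<lambda>(i, j). Y $$ (i, q * dim_row Y + j))"

end

theory Submission
  imports Defs
begin

text \<open>
  Automorphisms of \<open>W\<close> are right multiplications by invertible \<open>T\<close>; they preserve full
  \<open>B\<close>-submodules (those with \<open>A V = W\<close>), and so does deleting the first \<open>n\<close> columns.
  The core is a rank argument: some \<open>v \<in> V\<close> has \<open>min n m\<close> left independent rows. Given \<open>v\<close>
  with \<open>\<rho>\<close> independent rows, column operations make them unit rows. Either another row of
  \<open>v\<close> is nonzero beyond column \<open>\<rho>\<close>, or by density some \<open>b \<in> B\<close> moves column \<open>\<rho>\<close> of some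
  \<open>w \<in> V\<close> out of the right span of the first \<open>\<rho>\<close> columns of \<open>v\<close>; then \<open>v + c b w\<close> has
  \<open>\<rho> + 1\<close> independent rows for all but finitely many \<open>c \<in> k\<close>, because every bad \<open>c\<close> yields
  the central left eigenvalue \<open>-c\<^sup>-\<^sup>1\<close> of one fixed square matrix of size \<open>\<rho> + 1\<close>.
  With \<open>n\<close> independent rows, column operations put \<open>E\<^sub>1\<close> into \<open>V T\<close>; induction on \<open>m\<close>
  applied to the last \<open>m - n\<close> columns, lifted by a block lower triangular automorphism
  fixing \<open>E\<^sub>1\<close>, provides \<open>E\<^sub>2, \<dots>, E\<^sub>q\<close> and a tail of full rank.
\<close>

lemma index_mult_mat_sum:
  assumes "A \<in> carrier_mat a b" "B \<in> carrier_mat b c" "i < a" "j < c"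
  shows "(A * B) $$ (i, j) = (\<Sum>l<b. A $$ (i, l) * B $$ (l, j))"
  using assms by (auto simp: scalar_prod_def atLeast0LessThan intro!: sum.cong)

lemma sum_mult_sum_swap:
  fixes a :: "'s \<Rightarrow> 'a::semiring_0"
  shows "(\<Sum>j\<in>J. (\<Sum>s\<in>S. a s * X s j) * Y j) = (\<Sum>s\<in>S. a s * (\<Sum>j\<in>J. X s j * Y j))"
  by (simp add: sum_distrib_left sum_distrib_right mult.assoc) (rule sum.swap)

lemma sum_delta_mult [simp]:
  fixes f :: "'i \<Rightarrow> 'a::semiring_0"
  assumes "finite S"
  shows "(\<Sum>l\<in>S. (if l = s then c else 0) * f l) = (if s \<in> S then c * f s else 0)"
    and "(\<Sum>l\<in>S. (if s = l then c else 0) * f l) = (if s \<in> S then c * f s else 0)"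
    and "(\<Sum>l\<in>S. f l * (if l = s then c else 0)) = (if s \<in> S then f s * c else 0)"
    and "(\<Sum>l\<in>S. f l * (if s = l then c else 0)) = (if s \<in> S then f s * c else 0)"
  using assms
  by (simp_all add: if_distrib[of "\<lambda>x. x * _"] if_distrib[of "\<lambda>x. _ * x"] sum.delta' cong: if_cong)

lemma smult_one_mult_mat:
  fixes w :: "'a::ring_1 mat"
  assumes "w \<in> carrier_mat n p"
  shows "(c \<cdot>\<^sub>m 1\<^sub>m n) * w = c \<cdot>\<^sub>m w"
proof (rule eq_matI)
  fix i t assume "i < dim_row (c \<cdot>\<^sub>m w)" "t < dim_col (c \<cdot>\<^sub>m w)"
  then show "((c \<cdot>\<^sub>m 1\<^sub>m n) * w) $$ (i, t) = (c \<cdot>\<^sub>m w) $$ (i, t)"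
    using assms
    by (simp add: index_mult_mat_sum[of _ n n _ p] mult.assoc sum_distrib_left[symmetric]
        del: index_mult_mat(1))
qed (use assms in auto)

section \<open>Column operations and independent rows\<close>

lemma invertible_mat_carrierI:
  assumes "T \<in> carrier_mat p p" "T' \<in> carrier_mat p p" "T * T' = 1\<^sub>m p" "T' * T = 1\<^sub>m p"
  shows "invertible_mat T"
  using assms unfolding invertible_mat_def inverts_mat_def by auto

lemma invertible_mat_carrierE:
  assumes "invertible_mat T" "T \<in> carrier_mat p p"
  obtains T' where "T' \<in> carrier_mat p p" "T * T' = 1\<^sub>m p" "T' * T = 1\<^sub>m p"
proof -
  obtain T' where "T * T' = 1\<^sub>m p" "T' * T = 1\<^sub>m (dim_row T')"
    using assms unfolding invertible_mat_def inverts_mat_def by auto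
  moreover from this have "T' \<in> carrier_mat p p"
    using assms(2) by (metis carrier_matD carrier_matI index_mult_mat(2,3) index_one_mat(2,3))
  ultimately show ?thesis using that by auto
qed

lemma invertible_mat_one: "invertible_mat (1\<^sub>m p)"
  by (rule invertible_mat_carrierI[of _ p "1\<^sub>m p"]) auto

lemma invertible_mat_mult_carrier:
  assumes S: "S \<in> carrier_mat p p" "invertible_mat S"
      and T: "T \<in> carrier_mat p p" "invertible_mat T"
  shows "invertible_mat (S * T)"
proof -
  obtain S' where S': "S' \<in> carrier_mat p p" "S * S' = 1\<^sub>m p" "S' * S = 1\<^sub>m p"
    using invertible_mat_carrierE[OF S(2,1)] by blast
  obtain T' where T': "T' \<in> carrier_mat p p" "T * T' = 1\<^sub>m p" "T' * T = 1\<^sub>m p"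
    using invertible_mat_carrierE[OF T(2,1)] by blast
  have "(S * T) * (T' * S') = S * ((T * T') * S')"
    using S(1) S'(1) T(1) T'(1) by (simp add: assoc_mult_mat[of _ p p _ p _ p])
  moreover have "(T' * S') * (S * T) = T' * ((S' * S) * T)"
    using S(1) S'(1) T(1) T'(1) by (simp add: assoc_mult_mat[of _ p p _ p _ p])
  ultimately show ?thesis
    using S S' T T' by (intro invertible_mat_carrierI[of _ p "T' * S'"]) auto
qed

definition replace_row_id :: "nat \<Rightarrow> nat \<Rightarrow> (nat \<Rightarrow> 'a::ring_1) \<Rightarrow> 'a mat" where
  "replace_row_id p h a = mat p p (\<lambda>(j, t). if j = h then a t else if j = t then 1 else 0)"

lemma replace_row_id_carrier [simp]: "replace_row_id p h a \<in> carrier_mat p p"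
  unfolding replace_row_id_def by simp

lemma index_mult_replace_row_id:
  fixes X :: "'a::ring_1 mat"
  assumes "X \<in> carrier_mat r p" "h < p" "i < r" "t < p"
  shows "(X * replace_row_id p h a) $$ (i, t)
      = (if t = h then 0 else X $$ (i, t)) + X $$ (i, h) * a t"
proof -
  have "(X * replace_row_id p h a) $$ (i, t)
      = (\<Sum>l<p. X $$ (i, l) * (if l = h then a t else if l = t then 1 else 0))"
    using assms
    by (subst index_mult_mat_sum[of _ r p _ p]) (auto simp: replace_row_id_def intro!: sum.cong)
  also have "\<dots> = X $$ (i, h) * a t + (\<Sum>l\<in>{..<p} - {h}. X $$ (i, l) * (if l = t then 1 else 0))"
    using assms by (subst sum.remove[of _ h]) (auto intro!: sum.cong)
  also have "(\<Sum>l\<in>{..<p} - {h}. X $$ (i, l) * (if l = t then 1 else 0))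
      = (if t = h then 0 else X $$ (i, t))"
    using assms by simp
  finally show ?thesis by (simp add: add.commute)
qed

lemma invertible_replace_row_id:
  fixes a :: "nat \<Rightarrow> 'a::division_ring"
  assumes "h < p" "a h \<noteq> 0"
  shows "invertible_mat (replace_row_id p h a)"
proof -
  define b where "b t = (if t = h then inverse (a h) else - (inverse (a h) * a t))" for t
  have "replace_row_id p h a * replace_row_id p h b = 1\<^sub>m p"
    by (rule eq_matI, subst index_mult_replace_row_id[of _ p])
       (use assms in \<open>auto simp: replace_row_id_def b_def mult.assoc[symmetric]\<close>)
  moreover have "replace_row_id p h b * replace_row_id p h a = 1\<^sub>m p"
    by (rule eq_matI, subst index_mult_replace_row_id[of _ p])
       (use assms in \<open>auto simp: replace_row_id_def b_def mult.assoc\<close>)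
  ultimately show ?thesis by (intro invertible_mat_carrierI[of _ p "replace_row_id p h b"]) auto
qed

lemma column_op_move_nonzero:
  fixes X :: "'a::division_ring mat"
  assumes X: "X \<in> carrier_mat r p" and i: "i < r" and k: "k < p" and t0: "t0 < p" "X $$ (i, t0) \<noteq> 0"
  obtains T where "T \<in> carrier_mat p p" "invertible_mat T" "(X * T) $$ (i, k) \<noteq> 0"
    "\<And>i' t. i' < r \<Longrightarrow> t < p \<Longrightarrow> X $$ (i', t0) = 0 \<Longrightarrow> (X * T) $$ (i', t) = X $$ (i', t)"
proof (cases "X $$ (i, k) = 0")
  case False
  then show ?thesis using X by (intro that[of "1\<^sub>m p"]) (auto simp: invertible_mat_one)
next
  case True
  define a where "a t = (if t = t0 \<or> t = k then (1::'a) else 0)" for t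
  have "t0 \<noteq> k" using True t0 by auto
  then show ?thesis
    using X i k t0 True
    by (intro that[of "replace_row_id p t0 a"] invertible_replace_row_id)
       (auto simp: index_mult_replace_row_id a_def)
qed

lemma column_op_normalize:
  fixes X :: "'a::division_ring mat"
  assumes X: "X \<in> carrier_mat r p" and i: "i < r" and k: "k < p" "X $$ (i, k) \<noteq> 0"
  obtains T where "T \<in> carrier_mat p p" "invertible_mat T"
    "\<And>t. t < p \<Longrightarrow> (X * T) $$ (i, t) = (if t = k then 1 else 0)"
    "\<And>i' t. i' < r \<Longrightarrow> t < p \<Longrightarrow> X $$ (i', k) = 0 \<Longrightarrow> (X * T) $$ (i', t) = X $$ (i', t)"
proof
  define b where
    "b t = (if t = k then inverse (X $$ (i, k)) else - (inverse (X $$ (i, k)) * X $$ (i, t)))" for t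
  show "replace_row_id p k b \<in> carrier_mat p p" by simp
  show "invertible_mat (replace_row_id p k b)"
    using k by (intro invertible_replace_row_id) (auto simp: b_def)
  show "(X * replace_row_id p k b) $$ (i, t) = (if t = k then 1 else 0)" if "t < p" for t
    using X i k that by (auto simp: index_mult_replace_row_id b_def mult.assoc[symmetric])
  show "(X * replace_row_id p k b) $$ (i', t) = X $$ (i', t)"
    if "i' < r" "t < p" "X $$ (i', k) = 0" for i' t
    using X k that by (auto simp: index_mult_replace_row_id)
qed

lemma column_ops_unit_row:
  fixes X :: "'a::division_ring mat"
  assumes X: "X \<in> carrier_mat r p" and i: "i < r" and k: "k < p" and t0: "t0 < p" "X $$ (i, t0) \<noteq> 0"
  obtains T where "T \<in> carrier_mat p p" "invertible_mat T"
    "\<And>t. t < p \<Longrightarrow> (X * T) $$ (i, t) = (if t = k then 1 else 0)"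
    "\<And>i' t. i' < r \<Longrightarrow> t < p \<Longrightarrow> X $$ (i', t0) = 0 \<Longrightarrow> X $$ (i', k) = 0 \<Longrightarrow>
      (X * T) $$ (i', t) = X $$ (i', t)"
proof -
  obtain T1 where T1: "T1 \<in> carrier_mat p p" "invertible_mat T1" "(X * T1) $$ (i, k) \<noteq> 0"
    and fix1: "\<And>i' t. i' < r \<Longrightarrow> t < p \<Longrightarrow> X $$ (i', t0) = 0 \<Longrightarrow> (X * T1) $$ (i', t) = X $$ (i', t)"
    using column_op_move_nonzero[OF X i k t0] by blast
  have XT1: "X * T1 \<in> carrier_mat r p" using X T1 by simp
  obtain T2 where T2: "T2 \<in> carrier_mat p p" "invertible_mat T2"
    and row: "\<And>t. t < p \<Longrightarrow> (X * T1 * T2) $$ (i, t) = (if t = k then 1 else 0)"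
    and fix2: "\<And>i' t. i' < r \<Longrightarrow> t < p \<Longrightarrow> (X * T1) $$ (i', k) = 0 \<Longrightarrow>
      (X * T1 * T2) $$ (i', t) = (X * T1) $$ (i', t)"
    using column_op_normalize[OF XT1 i k T1(3)] by blast
  have "X * (T1 * T2) = X * T1 * T2" using X T1 T2 by (simp add: assoc_mult_mat[of _ r p _ p _ p])
  then show ?thesis
    using T1 T2 row fix1 fix2 k
    by (intro that[of "T1 * T2"] invertible_mat_mult_carrier) auto
qed

definition rows_indep :: "'a::division_ring mat \<Rightarrow> (nat \<Rightarrow> nat) \<Rightarrow> nat \<Rightarrow> bool" where
  "rows_indep M P k \<longleftrightarrow>
     (\<forall>\<alpha>. (\<forall>t<dim_col M. (\<Sum>s<k. \<alpha> s * M $$ (P s, t)) = 0) \<longrightarrow> (\<forall>s<k. \<alpha> s = 0))"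

definition unit_rows :: "'a::ring_1 mat \<Rightarrow> (nat \<Rightarrow> nat) \<Rightarrow> nat \<Rightarrow> bool" where
  "unit_rows M P k \<longleftrightarrow> (\<forall>s<k. \<forall>t<dim_col M. M $$ (P s, t) = (if t = s then 1 else 0))"

lemma rows_indep_of_mult:
  assumes M: "M \<in> carrier_mat n p" and T: "T \<in> carrier_mat p p'" and P: "\<forall>s<k. P s < n"
    and indep: "rows_indep (M * T) P k"
  shows "rows_indep M P k"
  unfolding rows_indep_def
proof (rule allI, rule impI)
  fix \<alpha> assume zero: "\<forall>t<dim_col M. (\<Sum>s<k. \<alpha> s * M $$ (P s, t)) = 0"
  have "(\<Sum>s<k. \<alpha> s * (M * T) $$ (P s, t)) = 0" if "t < p'" for t
  proof -
    have "(\<Sum>s<k. \<alpha> s * (M * T) $$ (P s, t)) = (\<Sum>s<k. \<alpha> s * (\<Sum>l<p. M $$ (P s, l) * T $$ (l, t)))"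
      using M T P that
      by (intro sum.cong refl) (simp add: index_mult_mat_sum[of _ n p _ p'] del: index_mult_mat(1))
    also have "\<dots> = (\<Sum>l<p. (\<Sum>s<k. \<alpha> s * M $$ (P s, l)) * T $$ (l, t))"
      by (rule sum_mult_sum_swap[symmetric])
    finally show ?thesis using zero M by simp
  qed
  then show "\<forall>s<k. \<alpha> s = 0" using indep T unfolding rows_indep_def by auto
qed

lemma rows_indep_mult_invertible:
  assumes M: "M \<in> carrier_mat n p" and T: "T \<in> carrier_mat p p" "invertible_mat T"
    and P: "\<forall>s<k. P s < n" and indep: "rows_indep M P k"
  shows "rows_indep (M * T) P k"
proof -
  obtain T' where T': "T' \<in> carrier_mat p p" "T * T' = 1\<^sub>m p"
    using invertible_mat_carrierE[OF T(2,1)] by blast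
  have "M * T * T' = M" using M T T' by (simp add: assoc_mult_mat[of _ n p _ p _ p])
  with indep have "rows_indep (M * T * T') P k" by simp
  moreover have "M * T \<in> carrier_mat n p" using M T by simp
  ultimately show ?thesis using rows_indep_of_mult T'(1) P by blast
qed

lemma rows_indep_SucD: "rows_indep M P (Suc k) \<Longrightarrow> rows_indep M P k"
  unfolding rows_indep_def
proof (rule allI, rule impI)
  fix \<alpha> :: "nat \<Rightarrow> 'a"
  assume indep: "\<forall>\<alpha>. (\<forall>t<dim_col M. (\<Sum>s<Suc k. \<alpha> s * M $$ (P s, t)) = 0) \<longrightarrow> (\<forall>s<Suc k. \<alpha> s = 0)"
    and zero: "\<forall>t<dim_col M. (\<Sum>s<k. \<alpha> s * M $$ (P s, t)) = 0"
  have "\<forall>t<dim_col M. (\<Sum>s<Suc k. (\<alpha>(k := 0)) s * M $$ (P s, t)) = 0"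
    using zero by simp
  then have "\<forall>s<Suc k. (\<alpha>(k := 0)) s = 0" using indep by blast
  then show "\<forall>s<k. \<alpha> s = 0"
    by (metis fun_upd_other less_SucI order_less_irrefl)
qed

lemma unit_rows_nonzero_beyond:
  assumes unit: "unit_rows M P k" and indep: "rows_indep M P (Suc k)"
  shows "\<exists>t0. k \<le> t0 \<and> t0 < dim_col M \<and> M $$ (P k, t0) \<noteq> 0"
proof (rule ccontr)
  assume "\<not> ?thesis"
  then have zero: "M $$ (P k, t) = 0" if "k \<le> t" "t < dim_col M" for t
    using that by auto
  define \<alpha> where "\<alpha> s = (if s = k then 1 else - M $$ (P k, s))" for s
  have "(\<Sum>s<Suc k. \<alpha> s * M $$ (P s, t)) = 0" if "t < dim_col M" for t
  proof -
    have "(\<Sum>s<k. \<alpha> s * M $$ (P s, t)) = - (\<Sum>s<k. M $$ (P k, s) * (if t = s then 1 else 0))"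
      using unit that unfolding unit_rows_def \<alpha>_def sum_negf[symmetric] by (intro sum.cong) auto
    then show ?thesis using zero that by (auto simp: \<alpha>_def)
  qed
  then have "\<alpha> k = 0" using indep unfolding rows_indep_def by blast
  then show False by (simp add: \<alpha>_def)
qed

lemma unit_rows_exists:
  fixes M :: "'a::division_ring mat"
  assumes M: "M \<in> carrier_mat n p" and P: "\<forall>s<k. P s < n" and indep: "rows_indep M P k"
  shows "\<exists>T\<in>carrier_mat p p. invertible_mat T \<and> unit_rows (M * T) P k"
  using P indep
proof (induction k)
  case 0
  show ?case by (auto simp: unit_rows_def intro!: bexI[of _ "1\<^sub>m p"] invertible_mat_one)
next
  case (Suc k)
  then obtain T1 where T1: "T1 \<in> carrier_mat p p" "invertible_mat T1"
      and unit1: "unit_rows (M * T1) P k"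
    using rows_indep_SucD by (metis less_SucI)
  define M1 where "M1 = M * T1"
  have M1: "M1 \<in> carrier_mat n p" using M T1 by (simp add: M1_def)
  have "rows_indep M1 P (Suc k)"
    unfolding M1_def using M T1 Suc.prems by (intro rows_indep_mult_invertible) auto
  then obtain t0 where t0: "k \<le> t0" "t0 < p" "M1 $$ (P k, t0) \<noteq> 0"
    using unit_rows_nonzero_beyond unit1 M1 unfolding M1_def by fastforce
  have unit1': "M1 $$ (P s, t) = (if t = s then 1 else 0)" if "s < k" "t < p" for s t
    using unit1 M1 that unfolding unit_rows_def M1_def by auto
  have k: "P k < n" "k < p" using Suc.prems t0 by auto
  obtain T2 where T2: "T2 \<in> carrier_mat p p" "invertible_mat T2"
    and row: "\<And>t. t < p \<Longrightarrow> (M1 * T2) $$ (P k, t) = (if t = k then 1 else 0)"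
    and fixed: "\<And>i' t. i' < n \<Longrightarrow> t < p \<Longrightarrow> M1 $$ (i', t0) = 0 \<Longrightarrow> M1 $$ (i', k) = 0 \<Longrightarrow>
      (M1 * T2) $$ (i', t) = M1 $$ (i', t)"
    using column_ops_unit_row[OF M1 k t0(2,3)] by blast
  have "(M1 * T2) $$ (P s, t) = (if t = s then 1 else 0)" if s: "s < Suc k" and t: "t < p" for s t
  proof (cases "s = k")
    case False
    then have "s < k" using s by simp
    then show ?thesis using fixed[of "P s" t] unit1' t0 t Suc.prems by auto
  qed (use row t in simp)
  then have "unit_rows (M1 * T2) P (Suc k)" using T2 by (simp add: unit_rows_def)
  moreover have "M * (T1 * T2) = M1 * T2"
    using M T1 T2 by (simp add: M1_def assoc_mult_mat[of _ n p _ p _ p])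
  ultimately show ?case using T1 T2
    by (intro bexI[of _ "T1 * T2"]) (auto intro: invertible_mat_mult_carrier)
qed

section \<open>Independent rows and central eigenvalues\<close>

lemma rows_indep_le_dim_col:
  fixes M :: "'a::division_ring mat"
  assumes M: "M \<in> carrier_mat n d" and P: "\<forall>s<k. P s < n" and indep: "rows_indep M P k"
  shows "k \<le> d"
proof (rule ccontr)
  assume "\<not> k \<le> d"
  then have d: "d < k" by simp
  obtain T where T: "T \<in> carrier_mat d d" "invertible_mat T" and unit: "unit_rows (M * T) P k"
    using unit_rows_exists[OF M P indep] by blast
  have indep': "rows_indep (M * T) P k" using rows_indep_mult_invertible[OF M T P indep] .
  define \<alpha> where "\<alpha> s = (if s = d then 1 else 0 :: 'a)" for s
  have "(\<Sum>s<k. \<alpha> s * (M * T) $$ (P s, t)) = 0" if "t < dim_col (M * T)" for t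
    using unit d that T(1) unfolding unit_rows_def \<alpha>_def by auto
  then have "\<alpha> d = 0" using indep' d unfolding rows_indep_def by blast
  then show False by (simp add: \<alpha>_def)
qed

lemma card_indep_le_dim:
  fixes f :: "'i \<Rightarrow> nat \<Rightarrow> 'a::division_ring"
  assumes I: "finite I"
    and indep: "\<And>\<alpha>. \<forall>j<d. (\<Sum>i\<in>I. \<alpha> i * f i j) = 0 \<Longrightarrow> \<forall>i\<in>I. \<alpha> i = 0"
  shows "card I \<le> d"
proof -
  obtain g where g: "bij_betw g {..<card I} I"
    using ex_bij_betw_nat_finite[OF I] by (auto simp: atLeast0LessThan)
  define M where "M = mat (card I) d (\<lambda>(s, j). f (g s) j)"
  have "rows_indep M id (card I)"
    unfolding rows_indep_def
  proof (rule allI, rule impI)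
    fix \<alpha> assume zero: "\<forall>t<dim_col M. (\<Sum>s<card I. \<alpha> s * M $$ (id s, t)) = 0"
    define \<alpha>' where "\<alpha>' = \<alpha> \<circ> inv_into {..<card I} g"
    have "(\<Sum>i\<in>I. \<alpha>' i * f i j) = (\<Sum>s<card I. \<alpha> s * M $$ (s, j))" if "j < d" for j
      unfolding sum.reindex_bij_betw[OF g, symmetric]
      using g that by (intro sum.cong) (auto simp: \<alpha>'_def M_def bij_betw_inv_into_left)
    then have "\<forall>i\<in>I. \<alpha>' i = 0" using zero by (intro indep) (simp add: M_def)
    show "\<forall>s<card I. \<alpha> s = 0"
    proof (intro allI impI)
      fix s assume "s < card I"
      then have "g s \<in> I" "inv_into {..<card I} g (g s) = s"
        using g by (auto simp: bij_betw_apply bij_betw_inv_into_left)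
      then show "\<alpha> s = 0" using \<open>\<forall>i\<in>I. \<alpha>' i = 0\<close> by (auto simp: \<alpha>'_def)
    qed
  qed
  then show ?thesis
    using rows_indep_le_dim_col[of M "card I" d "card I" id] by (simp add: M_def)
qed

lemma central_eigenvectors_indep:
  fixes \<beta> :: "'a \<Rightarrow> nat \<Rightarrow> 'a::division_ring"
  assumes "finite L"
    and central: "\<And>e x. e \<in> L \<Longrightarrow> e * x = x * e"
    and eigen: "\<And>e j. e \<in> L \<Longrightarrow> j < d \<Longrightarrow> (\<Sum>l<d. \<beta> e l * K l j) = e * \<beta> e j"
    and nonzero: "\<And>e. e \<in> L \<Longrightarrow> \<exists>j<d. \<beta> e j \<noteq> 0"
  shows "\<forall>j<d. (\<Sum>e\<in>L. \<alpha> e * \<beta> e j) = 0 \<Longrightarrow> \<forall>e\<in>L. \<alpha> e = 0"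
  using assms
proof (induction L arbitrary: \<alpha> rule: finite_induct)
  case empty
  then show ?case by simp
next
  case (insert \<mu> L)
  have shifted: "(\<Sum>e\<in>L. (\<alpha> e * (e - \<mu>)) * \<beta> e j) = 0" if j: "j < d" for j
  proof -
    have "(\<Sum>e\<in>insert \<mu> L. \<alpha> e * (e * \<beta> e j)) = (\<Sum>l<d. (\<Sum>e\<in>insert \<mu> L. \<alpha> e * \<beta> e l) * K l j)"
      using insert.prems(3) j by (simp add: sum_mult_sum_swap)
    also have "\<dots> = 0" using insert.prems(1) by simp
    finally have applied: "(\<Sum>e\<in>insert \<mu> L. \<alpha> e * (e * \<beta> e j)) = 0" .
    have "(\<Sum>e\<in>insert \<mu> L. \<alpha> e * (\<mu> * \<beta> e j)) = \<mu> * (\<Sum>e\<in>insert \<mu> L. \<alpha> e * \<beta> e j)"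
      unfolding sum_distrib_left
      by (intro sum.cong refl) (metis insert.prems(2) insertI1 mult.assoc)
    also have "\<dots> = 0" using insert.prems(1) j by simp
    finally have scaled: "(\<Sum>e\<in>insert \<mu> L. \<alpha> e * (\<mu> * \<beta> e j)) = 0" .
    have "(\<Sum>e\<in>insert \<mu> L. (\<alpha> e * (e - \<mu>)) * \<beta> e j)
        = (\<Sum>e\<in>insert \<mu> L. \<alpha> e * (e * \<beta> e j)) - (\<Sum>e\<in>insert \<mu> L. \<alpha> e * (\<mu> * \<beta> e j))"
      by (simp add: sum_subtractf[symmetric] algebra_simps)
    then show ?thesis using applied scaled insert.hyps by simp
  qed
  have "\<forall>e\<in>L. \<alpha> e * (e - \<mu>) = 0"
    using insert.IH[of "\<lambda>e. \<alpha> e * (e - \<mu>)"] shifted insert.prems(2-4) by auto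
  then have L0: "\<forall>e\<in>L. \<alpha> e = 0" using insert.hyps by auto
  obtain j where "j < d" "\<beta> \<mu> j \<noteq> 0" using insert.prems(4) by auto
  moreover have "\<alpha> \<mu> * \<beta> \<mu> j = 0" using insert.prems(1) L0 insert.hyps \<open>j < d\<close> by simp
  ultimately show ?case using L0 by auto
qed

definition central_left_eigenvalues :: "nat \<Rightarrow> (nat \<Rightarrow> nat \<Rightarrow> 'a::division_ring) \<Rightarrow> 'a set" where
  "central_left_eigenvalues d K = {e. (\<forall>x. e * x = x * e) \<and>
     (\<exists>\<beta>. (\<exists>j<d. \<beta> j \<noteq> 0) \<and> (\<forall>j<d. (\<Sum>l<d. \<beta> l * K l j) = e * \<beta> j))}"

lemma finite_central_left_eigenvalues: "finite (central_left_eigenvalues d K)"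
proof (rule ccontr)
  define eigvec where
    "eigvec e \<beta> \<longleftrightarrow> (\<exists>j<d. \<beta> j \<noteq> 0) \<and> (\<forall>j<d. (\<Sum>l<d. \<beta> l * K l j) = e * \<beta> j)" for e \<beta>
  assume "infinite (central_left_eigenvalues d K)"
  then obtain L where L: "L \<subseteq> central_left_eigenvalues d K" "finite L" "card L = Suc d"
    using infinite_arbitrarily_large by blast
  define \<beta> where "\<beta> e = (SOME \<beta>. eigvec e \<beta>)" for e
  have \<beta>: "eigvec e (\<beta> e)" if "e \<in> L" for e
  proof -
    have "\<exists>\<beta>. eigvec e \<beta>" using L(1) that by (auto simp: central_left_eigenvalues_def eigvec_def)
    then show ?thesis unfolding \<beta>_def by (rule someI_ex)
  qed
  have central: "e * x = x * e" if "e \<in> L" for e x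
    using L(1) that by (auto simp: central_left_eigenvalues_def)
  have eigen: "(\<Sum>l<d. \<beta> e l * K l j) = e * \<beta> e j" if "e \<in> L" "j < d" for e j
    using \<beta> that by (auto simp: eigvec_def)
  have nonzero: "\<exists>j<d. \<beta> e j \<noteq> 0" if "e \<in> L" for e
    using \<beta> that by (auto simp: eigvec_def)
  have "card L \<le> d"
    using central_eigenvectors_indep[OF L(2) central eigen nonzero]
    by (intro card_indep_le_dim[OF L(2)])
  then show False using L by simp
qed

lemma inverse_central:
  fixes c :: "'a::division_ring"
  assumes "\<forall>x. c * x = x * c"
  shows "inverse c * x = x * inverse c"
proof (cases "c = 0")
  case False
  have "inverse c * x = inverse c * (x * c) * inverse c" using False by (simp add: mult.assoc)
  also have "x * c = c * x" using assms by simp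
  also have "inverse c * (c * x) * inverse c = x * inverse c" using False
    by (simp add: mult.assoc[symmetric])
  finally show ?thesis .
qed simp

text \<open>A dependency \<open>\<alpha>\<close> of the rows of \<open>Q\<^sub>0 + c Q\<^sub>1\<close> makes \<open>\<alpha> Q\<^sub>0\<close> a left eigenvector of
  \<open>T Q\<^sub>1 = Q\<^sub>0\<^sup>-\<^sup>1 Q\<^sub>1\<close> with eigenvalue \<open>-c\<^sup>-\<^sup>1\<close>.\<close>

lemma singular_pencil_eigenvalue:
  fixes Q0 Q1 T :: "'a::division_ring mat"
  assumes Q0: "Q0 \<in> carrier_mat d d" and Q1: "Q1 \<in> carrier_mat d d" and T: "T \<in> carrier_mat d d"
    and inv: "Q0 * T = 1\<^sub>m d" and c: "c \<noteq> 0" "\<forall>x. c * x = x * c"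
    and singular: "\<not> rows_indep (Q0 + c \<cdot>\<^sub>m Q1) id d"
  shows "- inverse c \<in> central_left_eigenvalues d (\<lambda>l j. (T * Q1) $$ (l, j))"
proof -
  obtain \<alpha> where zero: "\<forall>t<d. (\<Sum>s<d. \<alpha> s * (Q0 + c \<cdot>\<^sub>m Q1) $$ (s, t)) = 0"
    and nonzero: "\<exists>s<d. \<alpha> s \<noteq> 0"
    using singular Q0 Q1 unfolding rows_indep_def by auto
  define \<beta> where "\<beta> j = (\<Sum>s<d. \<alpha> s * Q0 $$ (s, j))" for j
  have \<beta>T: "(\<Sum>l<d. \<beta> l * T $$ (l, m)) = \<alpha> m" if "m < d" for m
  proof -
    have "(\<Sum>l<d. \<beta> l * T $$ (l, m)) = (\<Sum>s<d. \<alpha> s * (Q0 * T) $$ (s, m))"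
      unfolding \<beta>_def sum_mult_sum_swap using Q0 T that
      by (simp add: index_mult_mat_sum[of _ d d _ d] del: index_mult_mat(1))
    then show ?thesis using inv that by simp
  qed
  have eigen: "(\<Sum>l<d. \<beta> l * (T * Q1) $$ (l, j)) = - inverse c * \<beta> j" if j: "j < d" for j
  proof -
    define \<gamma> where "\<gamma> = (\<Sum>s<d. \<alpha> s * Q1 $$ (s, j))"
    have "(\<Sum>l<d. \<beta> l * (T * Q1) $$ (l, j)) = (\<Sum>m<d. (\<Sum>l<d. \<beta> l * T $$ (l, m)) * Q1 $$ (m, j))"
      using T Q1 j
      by (simp add: index_mult_mat_sum[of _ d d _ d] sum_mult_sum_swap del: index_mult_mat(1))
    also have "\<dots> = \<gamma>" unfolding \<gamma>_def by (intro sum.cong) (simp_all add: \<beta>T)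
    finally have 1: "(\<Sum>l<d. \<beta> l * (T * Q1) $$ (l, j)) = \<gamma>" .
    have "c * \<gamma> = (\<Sum>s<d. \<alpha> s * (c * Q1 $$ (s, j)))"
      unfolding \<gamma>_def sum_distrib_left by (intro sum.cong refl) (metis c(2) mult.assoc)
    then have "\<beta> j + c * \<gamma> = (\<Sum>s<d. \<alpha> s * (Q0 $$ (s, j) + c * Q1 $$ (s, j)))"
      unfolding \<beta>_def by (simp add: distrib_left sum.distrib)
    also have "\<dots> = (\<Sum>s<d. \<alpha> s * (Q0 + c \<cdot>\<^sub>m Q1) $$ (s, j))"
      using Q0 Q1 j by (intro sum.cong) auto
    finally have "c * \<gamma> = - \<beta> j" using zero j by (simp add: eq_neg_iff_add_eq_0 add.commute)
    have "\<gamma> = inverse c * (c * \<gamma>)" using c(1) by (simp add: mult.assoc[symmetric])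
    also have "\<dots> = - inverse c * \<beta> j" using \<open>c * \<gamma> = - \<beta> j\<close> by simp
    finally show ?thesis using 1 by simp
  qed
  have "\<exists>j<d. \<beta> j \<noteq> 0"
  proof (rule ccontr)
    assume "\<not> ?thesis"
    then have "\<alpha> m = 0" if "m < d" for m using \<beta>T[OF that, symmetric] by simp
    then show False using nonzero by auto
  qed
  moreover have "\<forall>x. - inverse c * x = x * - inverse c"
    using inverse_central[OF c(2)] by simp
  ultimately show ?thesis unfolding central_left_eigenvalues_def using eigen by blast
qed

lemma finite_singular_central_pencil:
  fixes Q0 Q1 :: "'a::division_ring mat"
  assumes Q0: "Q0 \<in> carrier_mat d d" and Q1: "Q1 \<in> carrier_mat d d" and indep: "rows_indep Q0 id d"
  shows "finite {c. c \<noteq> 0 \<and> (\<forall>x. c * x = x * c) \<and> \<not> rows_indep (Q0 + c \<cdot>\<^sub>m Q1) id d}"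
    (is "finite ?S")
proof -
  obtain T where T: "T \<in> carrier_mat d d" "unit_rows (Q0 * T) id d"
    using unit_rows_exists[OF Q0 _ indep] by auto
  have "Q0 * T = 1\<^sub>m d" using T Q0 by (intro eq_matI) (auto simp: unit_rows_def)
  then have "(\<lambda>c. - inverse c) ` ?S \<subseteq> central_left_eigenvalues d (\<lambda>l j. (T * Q1) $$ (l, j))"
    using singular_pencil_eigenvalue[OF Q0 Q1 T(1)] by auto
  then have "finite ((\<lambda>c. - inverse c) ` ?S)"
    using finite_central_left_eigenvalues finite_subset by blast
  moreover have "inj_on (\<lambda>c. - inverse c) ?S" by (rule inj_onI) simp
  ultimately show ?thesis using finite_imageD by blast
qed

section \<open>Density\<close>

text \<open>\<open>dense_in\<close> only quantifies over modules whose elements are sets of matrices, so the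
  simple module \<open>D\<^sup>n\<close> of columns is encoded by singletons.\<close>

definition col_vecs :: "nat \<Rightarrow> 'a::division_ring mat set set" where
  "col_vecs n = (\<lambda>z. {z}) ` carrier_mat n 1"

definition set_plus_mat :: "'a::plus mat set \<Rightarrow> 'a mat set \<Rightarrow> 'a mat set" where
  "set_plus_mat X Y = {x + y | x y. x \<in> X \<and> y \<in> Y}"

definition set_mult_mat :: "'a::semiring_0 mat \<Rightarrow> 'a mat set \<Rightarrow> 'a mat set" where
  "set_mult_mat a X = (\<lambda>x. a * x) ` X"

lemma set_plus_mat_singleton [simp]: "set_plus_mat {x} {y} = {x + y}"
  by (auto simp: set_plus_mat_def)

lemma set_mult_mat_singleton [simp]: "set_mult_mat a {x} = {a * x}"
  by (simp add: set_mult_mat_def)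

lemma ball_col_vecs: "(\<forall>X\<in>col_vecs n. P X) \<longleftrightarrow> (\<forall>z\<in>carrier_mat n 1. P {z})"
  by (auto simp: col_vecs_def)

lemma col_vecs_left_module: "left_module n (col_vecs n) set_plus_mat {0\<^sub>m n 1} set_mult_mat"
  unfolding left_module_def ball_col_vecs
proof (intro conjI ballI)
  show "{0\<^sub>m n 1} \<in> col_vecs n" by (auto simp: col_vecs_def)
  fix x :: "'a mat" assume x: "x \<in> carrier_mat n 1"
  show "\<exists>y\<in>col_vecs n. set_plus_mat {x} y = {0\<^sub>m n 1}"
    using x by (intro bexI[of _ "{- x}"]) (auto simp: col_vecs_def)
  fix y :: "'a mat" assume y: "y \<in> carrier_mat n 1"
  show "set_plus_mat {x} {y} \<in> col_vecs n" using x y by (auto simp: col_vecs_def)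
  show "set_plus_mat {x} {y} = set_plus_mat {y} {x}" using x y by (simp add: comm_add_mat)
  fix z :: "'a mat" assume z: "z \<in> carrier_mat n 1"
  show "set_plus_mat (set_plus_mat {x} {y}) {z} = set_plus_mat {x} (set_plus_mat {y} {z})"
    using x y z by simp
next
  fix a x :: "'a mat" assume a: "a \<in> carrier_mat n n" and x: "x \<in> carrier_mat n 1"
  show "set_mult_mat a {x} \<in> col_vecs n" using a x by (auto simp: col_vecs_def)
  fix y :: "'a mat" assume y: "y \<in> carrier_mat n 1"
  show "set_mult_mat a (set_plus_mat {x} {y})
      = set_plus_mat (set_mult_mat a {x}) (set_mult_mat a {y})"
    using a x y by (simp add: mult_add_distrib_mat)
next
  fix a b x :: "'a mat"
  assume a: "a \<in> carrier_mat n n" and b: "b \<in> carrier_mat n n" and x: "x \<in> carrier_mat n 1"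
  show "set_mult_mat (a + b) {x} = set_plus_mat (set_mult_mat a {x}) (set_mult_mat b {x})"
    using a b x by (simp add: add_mult_distrib_mat)
  show "set_mult_mat (a * b) {x} = set_mult_mat a (set_mult_mat b {x})"
    using a b x by simp
qed (auto simp: col_vecs_def)

lemma mult_col_eq_any:
  fixes v t :: "'a::division_ring mat"
  assumes t: "t \<in> carrier_mat n 1" and v: "v \<in> carrier_mat n 1" "v \<noteq> 0\<^sub>m n 1"
  shows "\<exists>a\<in>carrier_mat n n. a * v = t"
proof -
  obtain i where i: "i < n" "v $$ (i, 0) \<noteq> 0"
    using v by (metis carrier_matD eq_matI index_zero_mat(1-3) less_one)
  define a where "a = mat n n (\<lambda>(r, j). if j = i then t $$ (r, 0) * inverse (v $$ (i, 0)) else 0)"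
  have "a * v = t"
  proof (rule eq_matI)
    fix r j assume "r < dim_row t" "j < dim_col t"
    then have "r < n" "j = 0" using t by auto
    then show "(a * v) $$ (r, j) = t $$ (r, j)"
      using v i
      by (simp add: a_def index_mult_mat_sum[of _ n n _ 1] mult.assoc del: index_mult_mat(1))
  qed (use t v in \<open>auto simp: a_def\<close>)
  then show ?thesis by (auto simp: a_def)
qed

lemma col_vecs_simple_module:
  assumes "n \<ge> 1"
  shows "simple_module n (col_vecs n) set_plus_mat {0\<^sub>m n 1} set_mult_mat"
  unfolding simple_module_def
proof (intro conjI col_vecs_left_module allI impI)
  have "mat n 1 (\<lambda>_. 1) $$ (0, 0) \<noteq> (0\<^sub>m n 1 :: 'a mat) $$ (0, 0)" using assms by simp
  then have "{mat n 1 (\<lambda>_. 1)} \<noteq> {0\<^sub>m n 1 :: 'a mat}" by auto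
  moreover have "{mat n 1 (\<lambda>_. 1)} \<in> (col_vecs n :: 'a mat set set)" by (auto simp: col_vecs_def)
  ultimately show "col_vecs n \<noteq> {{0\<^sub>m n 1 :: 'a mat}}" by auto
next
  fix S assume S: "S \<subseteq> col_vecs n \<and> {0\<^sub>m n 1} \<in> S \<and> (\<forall>x\<in>S. \<forall>y\<in>S. set_plus_mat x y \<in> S) \<and>
    (\<forall>a\<in>carrier_mat n n. \<forall>x\<in>S. set_mult_mat a x \<in> S)"
  show "S = {{0\<^sub>m n 1}} \<or> S = col_vecs n"
  proof (cases "S = {{0\<^sub>m n 1}}")
    case False
    then obtain X where X: "X \<in> S" "X \<noteq> {0\<^sub>m n 1}" using S by blast
    moreover obtain v where "v \<in> carrier_mat n 1" "X = {v}"
      using X(1) S by (auto simp: col_vecs_def)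
    ultimately have v: "{v} \<in> S" "v \<in> carrier_mat n 1" "v \<noteq> 0\<^sub>m n 1" by auto
    have "{t} \<in> S" if "t \<in> carrier_mat n 1" for t
      using mult_col_eq_any[OF that v(2,3)] S v(1) by force
    then have "S = col_vecs n" using S by (auto simp: col_vecs_def)
    then show ?thesis ..
  qed simp
qed

lemma col_vecs_endo_right_scalar:
  fixes f :: "'a::division_ring mat set \<Rightarrow> 'a mat set"
  assumes f: "module_endo n (col_vecs n) set_plus_mat set_mult_mat f" and n: "n \<ge> 1"
  obtains d where "\<And>z. z \<in> carrier_mat n 1 \<Longrightarrow> f {z} = {z * mat 1 1 (\<lambda>_. d)}"
proof -
  define e :: "'a mat" where "e = mat n 1 (\<lambda>(i, _). if i = 0 then 1 else 0)"
  have e: "e \<in> carrier_mat n 1" by (simp add: e_def)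
  then obtain g where g: "g \<in> carrier_mat n 1" "f {e} = {g}"
    using f unfolding module_endo_def col_vecs_def by blast
  have "f {z} = {z * mat 1 1 (\<lambda>_. g $$ (0, 0))}" if z: "z \<in> carrier_mat n 1" for z
  proof -
    define a :: "'a mat" where "a = mat n n (\<lambda>(r, j). if j = 0 then z $$ (r, 0) else 0)"
    have a: "a \<in> carrier_mat n n" by (simp add: a_def)
    have "a * e = z"
    proof (rule eq_matI)
      fix r j assume "r < dim_row z" "j < dim_col z"
      then have "r < n" "j = 0" using z by auto
      then show "(a * e) $$ (r, j) = z $$ (r, j)"
        using n by (simp add: a_def e_def index_mult_mat_sum[of _ n n _ 1] del: index_mult_mat(1))
    qed (use z e in \<open>auto simp: a_def\<close>)
    moreover have "a * g = z * mat 1 1 (\<lambda>_. g $$ (0, 0))"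
    proof (rule eq_matI)
      fix r j assume "r < dim_row (z * mat 1 1 (\<lambda>_. g $$ (0, 0)))"
          "j < dim_col (z * mat 1 1 (\<lambda>_. g $$ (0, 0)))"
      then have "r < n" "j = 0" using z by auto
      then show "(a * g) $$ (r, j) = (z * mat 1 1 (\<lambda>_. g $$ (0, 0))) $$ (r, j)"
        using n z g
        by (simp add: a_def index_mult_mat_sum[of _ n n _ 1] index_mult_mat_sum[of _ n 1 _ 1]
            del: index_mult_mat(1))
    qed (use z g in \<open>auto simp: a_def\<close>)
    moreover have "f (set_mult_mat a {e}) = set_mult_mat a (f {e})"
      using f a e unfolding module_endo_def ball_col_vecs by blast
    ultimately show ?thesis using g by simp
  qed
  then show ?thesis by (rule that)
qed

lemma B_preimage_sub_bimodule:
  fixes Z :: "'a::division_ring mat set"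
  assumes B: "k_subalgebra n k B" and n: "n \<ge> 1"
    and Z0: "0\<^sub>m n 1 \<in> Z" and Z_add: "\<And>x y. x \<in> Z \<Longrightarrow> y \<in> Z \<Longrightarrow> x + y \<in> Z"
    and Z_scale: "\<And>x d. x \<in> Z \<Longrightarrow> x * mat 1 1 (\<lambda>_. d) \<in> Z"
  defines "S \<equiv> (\<lambda>z. {z}) ` {z \<in> carrier_mat n 1. \<forall>b\<in>B. b * z \<in> Z}"
  shows "S \<subseteq> col_vecs n \<and> {0\<^sub>m n 1} \<in> S \<and> (\<forall>x\<in>S. \<forall>y\<in>S. set_plus_mat x y \<in> S) \<and>
    (\<forall>b\<in>B. \<forall>x\<in>S. set_mult_mat b x \<in> S) \<and>
    (\<forall>f. module_endo n (col_vecs n) set_plus_mat set_mult_mat f \<longrightarrow> (\<forall>x\<in>S. f x \<in> S))"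
proof (intro conjI ballI allI impI)
  have Bc: "\<And>b. b \<in> B \<Longrightarrow> b \<in> carrier_mat n n" and B_mult: "\<And>a b. a \<in> B \<Longrightarrow> b \<in> B \<Longrightarrow> a * b \<in> B"
    using B unfolding k_subalgebra_def by auto
  show "S \<subseteq> col_vecs n" by (auto simp: S_def col_vecs_def)
  have S_iff: "{z} \<in> S \<longleftrightarrow> z \<in> carrier_mat n 1 \<and> (\<forall>b\<in>B. b * z \<in> Z)" for z
    by (auto simp: S_def)
  have "\<forall>b\<in>B. b * 0\<^sub>m n 1 \<in> Z" using right_mult_zero_mat[OF Bc] Z0 by simp
  then show "{0\<^sub>m n 1} \<in> S" by (simp add: S_iff)
  show "set_plus_mat X Y \<in> S" if XY: "X \<in> S" "Y \<in> S" for X Y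
  proof -
    obtain x y where "X = {x}" "Y = {y}" "{x} \<in> S" "{y} \<in> S" using XY by (auto simp: S_def)
    moreover have "b * (x + y) = b * x + b * y"
        if "b \<in> B" "x \<in> carrier_mat n 1" "y \<in> carrier_mat n 1" for b
      using mult_add_distrib_mat[OF Bc[OF that(1)] that(2,3)] .
    ultimately show ?thesis using Z_add by (simp add: S_iff)
  qed
  show "set_mult_mat b X \<in> S" if bX: "b \<in> B" "X \<in> S" for b X
  proof -
    obtain x where "X = {x}" "{x} \<in> S" using bX(2) by (auto simp: S_def)
    moreover have "b' * (b * x) = (b' * b) * x" if "b' \<in> B" "x \<in> carrier_mat n 1" for b'
      using that \<open>b \<in> B\<close> Bc by (simp add: assoc_mult_mat[of _ n n _ n _ 1])
    moreover have "x \<in> carrier_mat n 1 \<Longrightarrow> b * x \<in> carrier_mat n 1" using Bc[OF bX(1)] by simp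
    ultimately show ?thesis using \<open>b \<in> B\<close> B_mult by (simp add: S_iff)
  qed
  show "f X \<in> S" if f: "module_endo n (col_vecs n) set_plus_mat set_mult_mat f"
      and X: "X \<in> S" for f X
  proof -
    obtain d where d: "\<And>z. z \<in> carrier_mat n 1 \<Longrightarrow> f {z} = {z * mat 1 1 (\<lambda>_. d)}"
      using col_vecs_endo_right_scalar[OF f n] by blast
    obtain z where z: "X = {z}" "{z} \<in> S" using X by (auto simp: S_def)
    then have "b * (z * mat 1 1 (\<lambda>_. d)) \<in> Z" if "b \<in> B" for b
      using that Bc Z_scale by (simp add: S_iff assoc_mult_mat[symmetric, of _ n n _ 1 _ 1])
    then show ?thesis using z d by (auto simp: S_iff)
  qed
qed

lemma dense_moves_off_right_subspace:
  fixes Z :: "'a::division_ring mat set"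
  assumes dense: "dense_in n B" and B: "k_subalgebra n k B" and n: "n \<ge> 1"
    and Z0: "0\<^sub>m n 1 \<in> Z" and Z_add: "\<And>x y. x \<in> Z \<Longrightarrow> y \<in> Z \<Longrightarrow> x + y \<in> Z"
    and Z_scale: "\<And>x d. x \<in> Z \<Longrightarrow> x * mat 1 1 (\<lambda>_. d) \<in> Z"
    and proper: "\<not> carrier_mat n 1 \<subseteq> Z"
    and u: "u \<in> carrier_mat n 1" "u \<noteq> 0\<^sub>m n 1"
  shows "\<exists>b\<in>B. b * u \<notin> Z"
proof (rule ccontr)
  assume "\<not> ?thesis"
  then have Bu: "\<forall>b\<in>B. b * u \<in> Z" by blast
  define S where "S = (\<lambda>z. {z}) ` {z \<in> carrier_mat n 1. \<forall>b\<in>B. b * z \<in> Z}"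
  have "\<forall>(U :: 'a mat set set) pl z0 act. simple_module n U pl z0 act
      \<longrightarrow> simple_bimodule n B U pl z0 act"
    using dense unfolding dense_in_def .
  then have "simple_bimodule n B (col_vecs n) set_plus_mat {0\<^sub>m n 1} set_mult_mat"
    using col_vecs_simple_module[OF n] by blast
  then have "\<forall>S. S \<subseteq> col_vecs n \<and> {0\<^sub>m n 1} \<in> S \<and> (\<forall>x\<in>S. \<forall>y\<in>S. set_plus_mat x y \<in> S) \<and>
      (\<forall>b\<in>B. \<forall>x\<in>S. set_mult_mat b x \<in> S) \<and>
      (\<forall>f. module_endo n (col_vecs n) set_plus_mat set_mult_mat f \<longrightarrow> (\<forall>x\<in>S. f x \<in> S))
      \<longrightarrow> S = {{0\<^sub>m n 1}} \<or> S = col_vecs n"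
    unfolding simple_bimodule_def by (elim conjE)
  from this[rule_format, OF B_preimage_sub_bimodule[OF B n Z0 Z_add Z_scale]]
  have "S = {{0\<^sub>m n 1}} \<or> S = col_vecs n" unfolding S_def .
  moreover have "{u} \<in> S" "{u} \<noteq> {0\<^sub>m n 1}" using u Bu by (auto simp: S_def)
  ultimately have S_all: "{z} \<in> S" if "z \<in> carrier_mat n 1" for z
    using that by (auto simp: col_vecs_def)
  have "1\<^sub>m n \<in> B" using B by (simp add: k_subalgebra_def)
  have "z \<in> Z" if z: "z \<in> carrier_mat n 1" for z
  proof -
    have "1\<^sub>m n * z \<in> Z" using S_all[OF z] \<open>1\<^sub>m n \<in> B\<close> by (auto simp: S_def)
    then show ?thesis using z by simp
  qed
  then show False using proper by blast
qed

section \<open>Elements of maximal rank in full submodules\<close>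

definition full_B_submodule :: "nat \<Rightarrow> nat \<Rightarrow> 'a::division_ring mat set \<Rightarrow> 'a mat set \<Rightarrow> bool" where
  "full_B_submodule n p B V \<longleftrightarrow> B_submodule n p B V \<and> A_span n p V = carrier_mat n p"

lemma A_span_carrier:
  assumes "V \<subseteq> carrier_mat n p"
  shows "A_span n p V \<subseteq> carrier_mat n p"
proof
  fix z assume "z \<in> A_span n p V"
  then show "z \<in> carrier_mat n p" using assms by (induction rule: A_span.induct) auto
qed

lemma A_span_mult_right:
  fixes V :: "'a::division_ring mat set"
  assumes V: "V \<subseteq> carrier_mat n p" and Q: "Q \<in> carrier_mat p p'" and z: "z \<in> A_span n p V"
  shows "z * Q \<in> A_span n p' ((\<lambda>X. X * Q) ` V)"
  using z
proof (induction rule: A_span.induct)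
  case zero
  then show ?case using Q A_span.zero by simp
next
  case (step a v x)
  have "v \<in> carrier_mat n p" "x \<in> carrier_mat n p" using step V A_span_carrier[OF V] by auto
  then have "(a * v + x) * Q = a * (v * Q) + x * Q"
    using step Q by (simp add: add_mult_distrib_mat[of _ n p] assoc_mult_mat[of _ n n _ p _ p'])
  then show ?case using step by (simp add: A_span.step)
qed

lemma B_submodule_mult_right:
  fixes V :: "'a::division_ring mat set"
  assumes V: "B_submodule n p B V" and B: "B \<subseteq> carrier_mat n n" and Q: "Q \<in> carrier_mat p p'"
  shows "B_submodule n p' B ((\<lambda>X. X * Q) ` V)"
proof -
  have Vc: "V \<subseteq> carrier_mat n p" using V by (simp add: B_submodule_def)
  have "0\<^sub>m n p' \<in> (\<lambda>X. X * Q) ` V"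
    using V Q by (intro image_eqI[of _ _ "0\<^sub>m n p"]) (auto simp: B_submodule_def)
  moreover have "x * Q + y * Q = (x + y) * Q" if "x \<in> V" "y \<in> V" for x y
    using that Vc Q by (simp add: add_mult_distrib_mat[of _ n p _ Q p'] subset_iff)
  moreover have "- (x * Q) = (- x) * Q" if "x \<in> V" for x
    using that Vc Q by (subst uminus_mult_left_mat) auto
  moreover have "b * (x * Q) = (b * x) * Q" if "b \<in> B" "x \<in> V" for b x
    using that Vc Q B by (simp add: subset_iff assoc_mult_mat[of _ n n _ p _ p'])
  ultimately show ?thesis using V Vc Q unfolding B_submodule_def by (auto simp: image_iff)
qed

lemma full_B_submodule_mult_right:
  fixes V :: "'a::division_ring mat set"
  assumes V: "full_B_submodule n p B V" and B: "B \<subseteq> carrier_mat n n"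
    and Q: "Q \<in> carrier_mat p p'" and R: "R \<in> carrier_mat p' p" "R * Q = 1\<^sub>m p'"
  shows "full_B_submodule n p' B ((\<lambda>X. X * Q) ` V)"
proof -
  have sub: "B_submodule n p B V" and span: "A_span n p V = carrier_mat n p"
    using V by (auto simp: full_B_submodule_def)
  have Vc: "V \<subseteq> carrier_mat n p" using sub by (simp add: B_submodule_def)
  have "Y \<in> A_span n p' ((\<lambda>X. X * Q) ` V)" if Y: "Y \<in> carrier_mat n p'" for Y
  proof -
    have "Y * R * Q = Y" using Y Q R by (simp add: assoc_mult_mat[of _ n p' _ p _ p'])
    moreover have "Y * R \<in> A_span n p V" using Y R span by simp
    ultimately show ?thesis using A_span_mult_right[OF Vc Q] by metis
  qed
  moreover have "(\<lambda>X. X * Q) ` V \<subseteq> carrier_mat n p'" using Vc Q by auto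
  ultimately show ?thesis
    using B_submodule_mult_right[OF sub B Q] A_span_carrier
    unfolding full_B_submodule_def by blast
qed

lemma full_B_submodule_mult_invertible:
  assumes V: "full_B_submodule n p B V" and B: "B \<subseteq> carrier_mat n n"
    and T: "T \<in> carrier_mat p p" "invertible_mat T"
  shows "full_B_submodule n p B ((\<lambda>X. X * T) ` V)"
  using invertible_mat_carrierE[OF T(2,1)] full_B_submodule_mult_right[OF V B T(1)] by metis

lemma full_B_submodule_nonzero_col:
  fixes V :: "'a::division_ring mat set"
  assumes V: "full_B_submodule n p B V" and n: "n \<ge> 1" and t: "t < p"
  shows "\<exists>w\<in>V. \<exists>i<n. w $$ (i, t) \<noteq> 0"
proof (rule ccontr)
  assume "\<not> ?thesis"
  then have zero: "\<And>w i. w \<in> V \<Longrightarrow> i < n \<Longrightarrow> w $$ (i, t) = 0" by blast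
  have Vc: "V \<subseteq> carrier_mat n p" using V by (simp add: full_B_submodule_def B_submodule_def)
  have "z $$ (i, t) = 0" if "z \<in> A_span n p V" "i < n" for z i
    using that
  proof (induction arbitrary: i rule: A_span.induct)
    case (step a v x)
    have "v \<in> carrier_mat n p" "x \<in> carrier_mat n p" using step Vc A_span_carrier[OF Vc] by auto
    then show ?case
      using step t zero[OF step(2)]
      by (simp add: index_mult_mat_sum[of _ n n _ p] del: index_mult_mat(1))
  qed (use t in simp)
  moreover have "mat n p (\<lambda>(i, j). if i = 0 \<and> j = t then 1 else 0) \<in> A_span n p V"
    using V by (simp add: full_B_submodule_def)
  ultimately show False using n t by fastforce
qed

lemma rows_indep_unit_rows_extend:
  fixes M :: "'a::division_ring mat"
  assumes M: "M \<in> carrier_mat n p" and unit: "unit_rows M P \<rho>"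
    and t: "\<rho> \<le> t" "t < p" "M $$ (i0, t) \<noteq> 0"
  shows "rows_indep M (P(\<rho> := i0)) (Suc \<rho>)"
  unfolding rows_indep_def
proof (rule allI, rule impI)
  fix \<alpha> assume zero: "\<forall>t<dim_col M. (\<Sum>s<Suc \<rho>. \<alpha> s * M $$ ((P(\<rho> := i0)) s, t)) = 0"
  have row: "(\<Sum>s<Suc \<rho>. \<alpha> s * M $$ ((P(\<rho> := i0)) s, t'))
      = (if t' < \<rho> then \<alpha> t' else 0) + \<alpha> \<rho> * M $$ (i0, t')"
    if "t' < p" for t'
  proof -
    have "(\<Sum>s<\<rho>. \<alpha> s * M $$ ((P(\<rho> := i0)) s, t')) = (\<Sum>s<\<rho>. \<alpha> s * (if t' = s then 1 else 0))"
      using unit M that by (intro sum.cong) (auto simp: unit_rows_def)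
    then show ?thesis by simp
  qed
  have "\<alpha> \<rho> = 0" using zero row[of t] t M by simp
  moreover have "\<alpha> s = 0" if "s < \<rho>" for s
    using zero row[of s] \<open>\<alpha> \<rho> = 0\<close> that t M by simp
  ultimately show "\<forall>s<Suc \<rho>. \<alpha> s = 0" by (auto simp: less_Suc_eq)
qed

text \<open>When the rows \<open>P s\<close> of \<open>M\<close> are unit rows, this is the right span of the first \<open>\<rho>\<close>
  columns of \<open>M\<close>.\<close>

definition pivot_span :: "'a::semiring_0 mat \<Rightarrow> (nat \<Rightarrow> nat) \<Rightarrow> nat \<Rightarrow> 'a mat set" where
  "pivot_span M P \<rho> = {z \<in> carrier_mat (dim_row M) 1.
     \<forall>i<dim_row M. z $$ (i, 0) = (\<Sum>s<\<rho>. M $$ (i, s) * z $$ (P s, 0))}"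

lemma pivot_span_subspace:
  fixes M :: "'a::semiring_1 mat"
  assumes P: "\<forall>s<\<rho>. P s < dim_row M"
  shows "0\<^sub>m (dim_row M) 1 \<in> pivot_span M P \<rho>"
    and "x \<in> pivot_span M P \<rho> \<Longrightarrow> y \<in> pivot_span M P \<rho> \<Longrightarrow> x + y \<in> pivot_span M P \<rho>"
    and "x \<in> pivot_span M P \<rho> \<Longrightarrow> x * mat 1 1 (\<lambda>_. d) \<in> pivot_span M P \<rho>"
proof -
  show "0\<^sub>m (dim_row M) 1 \<in> pivot_span M P \<rho>" using P by (simp add: pivot_span_def)
  assume x: "x \<in> pivot_span M P \<rho>"
  then have xc: "x \<in> carrier_mat (dim_row M) 1" by (simp add: pivot_span_def)
  have scale: "(x * mat 1 1 (\<lambda>_. d)) $$ (i, 0) = x $$ (i, 0) * d" if "i < dim_row M" for i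
    using xc that by (simp add: index_mult_mat_sum[of _ "dim_row M" 1 _ 1] del: index_mult_mat(1))
  have "(x * mat 1 1 (\<lambda>_. d)) $$ (i, 0) = (\<Sum>s<\<rho>. M $$ (i, s) * (x * mat 1 1 (\<lambda>_. d)) $$ (P s, 0))"
    if "i < dim_row M" for i
  proof -
    have "(\<Sum>s<\<rho>. M $$ (i, s) * (x * mat 1 1 (\<lambda>_. d)) $$ (P s, 0))
        = (\<Sum>s<\<rho>. M $$ (i, s) * x $$ (P s, 0)) * d"
      unfolding sum_distrib_right using P scale by (intro sum.cong refl) (simp add: mult.assoc)
    then show ?thesis using x that scale[OF that] by (simp add: pivot_span_def)
  qed
  then show "x * mat 1 1 (\<lambda>_. d) \<in> pivot_span M P \<rho>" using xc by (simp add: pivot_span_def)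
  assume "y \<in> pivot_span M P \<rho>"
  then show "x + y \<in> pivot_span M P \<rho>"
    using x xc P unfolding pivot_span_def by (auto simp: sum.distrib distrib_left)
qed

lemma unit_col_notin_pivot_span:
  fixes M :: "'a::semiring_1 mat"
  assumes P: "\<forall>s<\<rho>. P s < dim_row M" and i: "i < dim_row M" "i \<notin> P ` {..<\<rho>}"
  shows "mat (dim_row M) 1 (\<lambda>(r, _). if r = i then 1 else 0) \<notin> pivot_span M P \<rho>"
proof
  assume "mat (dim_row M) 1 (\<lambda>(r, _). if r = i then 1 else 0) \<in> pivot_span M P \<rho>"
  then have "(1 :: 'a)
      = (\<Sum>s<\<rho>. M $$ (i, s) * mat (dim_row M) 1 (\<lambda>(r, _). if r = i then 1 else 0) $$ (P s, 0))"
    using i by (auto simp: pivot_span_def)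
  also have "\<dots> = 0" using P i by (intro sum.neutral) auto
  finally show False by simp
qed

definition bordered_mat :: "'a::zero mat \<Rightarrow> 'a mat \<Rightarrow> (nat \<Rightarrow> nat) \<Rightarrow> nat \<Rightarrow> 'a mat" where
  "bordered_mat M w P \<rho>
      = mat (Suc \<rho>) (Suc \<rho>) (\<lambda>(s, j). if j < \<rho> then M $$ (P s, j) else w $$ (P s, \<rho>))"

text \<open>The hypothesis \<open>gap\<close> says that the Schur complement of the identity block is nonzero.\<close>

lemma rows_indep_bordered:
  fixes M w :: "'a::division_ring mat"
  assumes M: "M \<in> carrier_mat n p" and unit: "unit_rows M P \<rho>" and \<rho>: "\<rho> < p"
    and gap: "w $$ (i0, \<rho>) \<noteq> (\<Sum>s<\<rho>. M $$ (i0, s) * w $$ (P s, \<rho>))"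
  shows "rows_indep (bordered_mat M w (P(\<rho> := i0)) \<rho>) id (Suc \<rho>)"
  unfolding rows_indep_def
proof (rule allI, rule impI)
  fix \<alpha>
  assume zero: "\<forall>t<dim_col (bordered_mat M w (P(\<rho> := i0)) \<rho>).
    (\<Sum>s<Suc \<rho>. \<alpha> s * bordered_mat M w (P(\<rho> := i0)) \<rho> $$ (id s, t)) = 0"
  define Bm where "Bm = bordered_mat M w (P(\<rho> := i0)) \<rho>"
  have split: "(\<Sum>s<Suc \<rho>. \<alpha> s * Bm $$ (s, j))
      = (\<Sum>s<\<rho>. \<alpha> s * (if j < \<rho> then M $$ (P s, j) else w $$ (P s, \<rho>)))
        + \<alpha> \<rho> * (if j < \<rho> then M $$ (i0, j) else w $$ (i0, \<rho>))" if "j \<le> \<rho>" for j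
  proof -
    have "(\<Sum>s<\<rho>. \<alpha> s * Bm $$ (s, j))
        = (\<Sum>s<\<rho>. \<alpha> s * (if j < \<rho> then M $$ (P s, j) else w $$ (P s, \<rho>)))"
      using that by (intro sum.cong) (auto simp: Bm_def bordered_mat_def)
    moreover have "Bm $$ (\<rho>, j) = (if j < \<rho> then M $$ (i0, j) else w $$ (i0, \<rho>))"
      using that by (simp add: Bm_def bordered_mat_def)
    ultimately show ?thesis by simp
  qed
  have dim: "dim_col Bm = Suc \<rho>" by (simp add: Bm_def bordered_mat_def)
  note zero = zero[folded Bm_def, unfolded dim id_apply]
  have cols: "(\<Sum>s<\<rho>. \<alpha> s * M $$ (P s, j)) + \<alpha> \<rho> * M $$ (i0, j) = 0" if "j < \<rho>" for j
    using zero[rule_format, of j] split[of j] that by simp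
  have last: "(\<Sum>s<\<rho>. \<alpha> s * w $$ (P s, \<rho>)) + \<alpha> \<rho> * w $$ (i0, \<rho>) = 0"
    using zero[rule_format, of \<rho>] split[of \<rho>] by simp
  have first: "\<alpha> j = - (\<alpha> \<rho> * M $$ (i0, j))" if j: "j < \<rho>" for j
  proof -
    have "(\<Sum>s<\<rho>. \<alpha> s * M $$ (P s, j)) = (\<Sum>s<\<rho>. \<alpha> s * (if j = s then 1 else 0))"
      using unit M j \<rho> by (intro sum.cong) (auto simp: unit_rows_def)
    then show ?thesis using cols[OF j] j by (simp add: eq_neg_iff_add_eq_0)
  qed
  have "(\<Sum>s<\<rho>. \<alpha> s * w $$ (P s, \<rho>)) = (\<Sum>s<\<rho>. - (\<alpha> \<rho> * (M $$ (i0, s) * w $$ (P s, \<rho>))))"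
    by (intro sum.cong) (simp_all add: first mult.assoc)
  with last have "\<alpha> \<rho> * (w $$ (i0, \<rho>) - (\<Sum>s<\<rho>. M $$ (i0, s) * w $$ (P s, \<rho>))) = 0"
    by (simp add: right_diff_distrib sum_distrib_left sum_negf add.commute)
  then have "\<alpha> \<rho> = 0" using gap by simp
  then show "\<forall>s<Suc \<rho>. \<alpha> s = 0" using first by (auto simp: less_Suc_eq)
qed

text \<open>As column \<open>\<rho>\<close> of \<open>M\<close> vanishes, the rows \<open>P s\<close> of \<open>M + c w\<close> on the columns
  \<open>0, \<dots>, \<rho>\<close> are the rows of the pencil below with the last column multiplied by \<open>c\<close>.\<close>

lemma rows_indep_of_bordered_pencil:
  fixes M w :: "'a::division_ring mat"
  assumes M: "M \<in> carrier_mat n p" and w: "w \<in> carrier_mat n p"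
    and P: "\<forall>s<Suc \<rho>. P s < n" and \<rho>: "\<rho> < p" and zero_col: "\<forall>i<n. M $$ (i, \<rho>) = 0"
    and c: "c \<noteq> 0" "\<forall>x. c * x = x * c"
    and indep: "rows_indep (bordered_mat M w P \<rho> + c \<cdot>\<^sub>m bordered_mat w (0\<^sub>m n p) P \<rho>) id (Suc \<rho>)"
  shows "rows_indep (M + c \<cdot>\<^sub>m w) P (Suc \<rho>)"
  unfolding rows_indep_def
proof (rule allI, rule impI)
  define Q where "Q = bordered_mat M w P \<rho> + c \<cdot>\<^sub>m bordered_mat w (0\<^sub>m n p) P \<rho>"
  have Q: "Q \<in> carrier_mat (Suc \<rho>) (Suc \<rho>)" by (simp add: Q_def bordered_mat_def)
  have P': "P s < n" if "s < Suc \<rho>" for s using P that by simp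
  fix \<alpha> assume zero: "\<forall>t<dim_col (M + c \<cdot>\<^sub>m w). (\<Sum>s<Suc \<rho>. \<alpha> s * (M + c \<cdot>\<^sub>m w) $$ (P s, t)) = 0"
  have "(\<Sum>s<Suc \<rho>. \<alpha> s * Q $$ (id s, j)) = 0" if j: "j < Suc \<rho>" for j
  proof (cases "j < \<rho>")
    case True
    have "(\<Sum>s<Suc \<rho>. \<alpha> s * Q $$ (id s, j)) = (\<Sum>s<Suc \<rho>. \<alpha> s * (M + c \<cdot>\<^sub>m w) $$ (P s, j))"
      using M w P' \<rho> True by (intro sum.cong) (auto simp: Q_def bordered_mat_def)
    then show ?thesis using zero True \<rho> w by simp
  next
    case False
    then have "j = \<rho>" using j by simp
    have "c * (\<Sum>s<Suc \<rho>. \<alpha> s * Q $$ (id s, j)) = (\<Sum>s<Suc \<rho>. \<alpha> s * (M + c \<cdot>\<^sub>m w) $$ (P s, \<rho>))"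
      unfolding sum_distrib_left
    proof (intro sum.cong refl)
      fix s assume "s \<in> {..<Suc \<rho>}"
      then have "Q $$ (s, j) = w $$ (P s, \<rho>)" "(M + c \<cdot>\<^sub>m w) $$ (P s, \<rho>) = c * w $$ (P s, \<rho>)"
        using M w P' \<rho> zero_col \<open>j = \<rho>\<close> by (auto simp: Q_def bordered_mat_def)
      then show "c * (\<alpha> s * Q $$ (id s, j)) = \<alpha> s * (M + c \<cdot>\<^sub>m w) $$ (P s, \<rho>)"
        using c(2) by (metis id_apply mult.assoc)
    qed
    then show ?thesis using zero \<rho> w c(1) by simp
  qed
  then show "\<forall>s<Suc \<rho>. \<alpha> s = 0" using indep Q unfolding rows_indep_def Q_def[symmetric] by auto
qed

lemma rows_indep_generic_combination:
  fixes M w :: "'a::division_ring mat" and k :: "'a set"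
  assumes k: "central_subfield k" "infinite k"
    and M: "M \<in> carrier_mat n p" and w: "w \<in> carrier_mat n p"
    and P: "\<forall>s<\<rho>. P s < n" and i0: "i0 < n" and \<rho>: "\<rho> < p"
    and unit: "unit_rows M P \<rho>" and zero_col: "\<forall>i<n. M $$ (i, \<rho>) = 0"
    and gap: "w $$ (i0, \<rho>) \<noteq> (\<Sum>s<\<rho>. M $$ (i0, s) * w $$ (P s, \<rho>))"
  shows "\<exists>c\<in>k. c \<noteq> 0 \<and> rows_indep (M + c \<cdot>\<^sub>m w) (P(\<rho> := i0)) (Suc \<rho>)"
proof -
  define Q0 where "Q0 = bordered_mat M w (P(\<rho> := i0)) \<rho>"
  define Q1 where "Q1 = bordered_mat w (0\<^sub>m n p) (P(\<rho> := i0)) \<rho>"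
  have Q: "Q0 \<in> carrier_mat (Suc \<rho>) (Suc \<rho>)" "Q1 \<in> carrier_mat (Suc \<rho>) (Suc \<rho>)"
    by (simp_all add: Q0_def Q1_def bordered_mat_def)
  have central: "c * x = x * c" if "c \<in> k" for c x
    using k(1) that unfolding central_subfield_def by blast
  define F where "F = {c. c \<noteq> 0 \<and> (\<forall>x. c * x = x * c) \<and> \<not> rows_indep (Q0 + c \<cdot>\<^sub>m Q1) id (Suc \<rho>)}"
  have "finite F"
    unfolding F_def Q0_def
    using finite_singular_central_pencil[OF Q] rows_indep_bordered[OF M unit \<rho> gap]
    by (simp add: Q0_def)
  then have "infinite (k - {0} - F)" using k(2) by (simp add: Diff_infinite_finite)
  then obtain c where c: "c \<in> k" "c \<noteq> 0" "rows_indep (Q0 + c \<cdot>\<^sub>m Q1) id (Suc \<rho>)"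
    using central by (auto simp: F_def dest!: infinite_imp_nonempty)
  have "\<forall>s<Suc \<rho>. (P(\<rho> := i0)) s < n" using P i0 by (simp add: less_Suc_eq)
  then have "rows_indep (M + c \<cdot>\<^sub>m w) (P(\<rho> := i0)) (Suc \<rho>)"
    using rows_indep_of_bordered_pencil[OF M w _ \<rho> zero_col c(2)] c(3) central[OF c(1)]
    unfolding Q0_def Q1_def by blast
  then show ?thesis using c by blast
qed

text \<open>Density is used exactly here: the column \<open>\<rho>\<close> of some element of \<open>V\<close> is nonzero, and
  \<open>B\<close> moves it out of the proper right subspace \<open>pivot_span M P \<rho>\<close>.\<close>

lemma full_B_submodule_col_off_pivot_span:
  fixes M :: "'a::division_ring mat" and k :: "'a set"
  assumes n: "n \<ge> 1" and B: "k_subalgebra n k B" and dense: "dense_in n B"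
    and V: "full_B_submodule n p B V" and M: "M \<in> carrier_mat n p"
    and P: "\<forall>s<\<rho>. P s < n" and \<rho>: "\<rho> < n" "\<rho> < p"
  shows "\<exists>w\<in>V. \<exists>i0<n. w $$ (i0, \<rho>) \<noteq> (\<Sum>s<\<rho>. M $$ (i0, s) * w $$ (P s, \<rho>))"
proof -
  obtain w0 i1 where w0: "w0 \<in> V" "i1 < n" "w0 $$ (i1, \<rho>) \<noteq> 0"
    using full_B_submodule_nonzero_col[OF V n \<rho>(2)] by blast
  define u where "u = mat n 1 (\<lambda>(i, _). w0 $$ (i, \<rho>))"
  have u: "u \<in> carrier_mat n 1" "u \<noteq> 0\<^sub>m n 1"
    using w0 by (auto simp: u_def dest!: arg_cong[where f = "\<lambda>X. X $$ (i1, 0)"])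
  have "card (P ` {..<\<rho>}) < n" using \<rho>(1) card_image_le[of "{..<\<rho>}" P] by simp
  then obtain i where i: "i < n" "i \<notin> P ` {..<\<rho>}"
    by (metis card_lessThan card_mono finite_imageI finite_lessThan lessThan_iff not_le subsetI)
  have Z: "0\<^sub>m n 1 \<in> pivot_span M P \<rho>"
    "\<And>x y. x \<in> pivot_span M P \<rho> \<Longrightarrow> y \<in> pivot_span M P \<rho> \<Longrightarrow> x + y \<in> pivot_span M P \<rho>"
    "\<And>x d. x \<in> pivot_span M P \<rho> \<Longrightarrow> x * mat 1 1 (\<lambda>_. d) \<in> pivot_span M P \<rho>"
    using pivot_span_subspace[of \<rho> P M] M P by auto
  have "mat n 1 (\<lambda>(r, _). if r = i then 1 else 0) \<notin> pivot_span M P \<rho>"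
    using unit_col_notin_pivot_span[of \<rho> P M i] M P i by auto
  then have proper: "\<not> carrier_mat n 1 \<subseteq> pivot_span M P \<rho>" by (meson mat_carrier subsetD)
  obtain b where b: "b \<in> B" "b * u \<notin> pivot_span M P \<rho>"
    using dense_moves_off_right_subspace[OF dense B n Z proper u] by blast
  have bc: "b \<in> carrier_mat n n" using B b(1) by (auto simp: k_subalgebra_def)
  have w0c: "w0 \<in> carrier_mat n p" using V w0(1)
    by (auto simp: full_B_submodule_def B_submodule_def)
  have bu: "(b * u) $$ (i, 0) = (b * w0) $$ (i, \<rho>)" if "i < n" for i
    using that bc w0c \<rho>
    by (simp add: u_def index_mult_mat_sum[of _ n n _ 1] index_mult_mat_sum[of _ n n _ p]
        del: index_mult_mat(1))
  have "b * u \<in> carrier_mat n 1" using bc u by simp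
  then obtain i0 where i0: "i0 < n"
      "(b * u) $$ (i0, 0) \<noteq> (\<Sum>s<\<rho>. M $$ (i0, s) * (b * u) $$ (P s, 0))"
    using b(2) M by (auto simp: pivot_span_def)
  moreover have "(\<Sum>s<\<rho>. M $$ (i0, s) * (b * u) $$ (P s, 0))
      = (\<Sum>s<\<rho>. M $$ (i0, s) * (b * w0) $$ (P s, \<rho>))"
    using P by (intro sum.cong) (simp_all add: bu)
  ultimately have "(b * w0) $$ (i0, \<rho>) \<noteq> (\<Sum>s<\<rho>. M $$ (i0, s) * (b * w0) $$ (P s, \<rho>))"
    using bu by simp
  moreover have "b * w0 \<in> V" using V b(1) w0(1) by (simp add: full_B_submodule_def B_submodule_def)
  ultimately show ?thesis using i0(1) by blast
qed

lemma full_B_submodule_rows_indep_Suc: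
  fixes M :: "'a::division_ring mat" and k :: "'a set"
  assumes k: "central_subfield k" "infinite k" and n: "n \<ge> 1"
    and B: "k_subalgebra n k B" and dense: "dense_in n B"
    and V: "full_B_submodule n p B V" and MV: "M \<in> V"
    and P: "\<forall>s<\<rho>. P s < n" and unit: "unit_rows M P \<rho>" and \<rho>: "\<rho> < n" "\<rho> < p"
  shows "\<exists>N\<in>V. \<exists>i0<n. rows_indep N (P(\<rho> := i0)) (Suc \<rho>)"
proof (cases "\<exists>i0<n. \<exists>t. \<rho> \<le> t \<and> t < p \<and> M $$ (i0, t) \<noteq> 0")
  case True
  have "M \<in> carrier_mat n p" using V MV by (auto simp: full_B_submodule_def B_submodule_def)
  then show ?thesis using True rows_indep_unit_rows_extend[OF _ unit] MV by blast
next
  case False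
  have sub: "B_submodule n p B V" using V by (simp add: full_B_submodule_def)
  have M: "M \<in> carrier_mat n p" using sub MV by (auto simp: B_submodule_def)
  obtain w i0 where w: "w \<in> V" "i0 < n" "w $$ (i0, \<rho>) \<noteq> (\<Sum>s<\<rho>. M $$ (i0, s) * w $$ (P s, \<rho>))"
    using full_B_submodule_col_off_pivot_span[OF n B dense V M P \<rho>] by blast
  have wc: "w \<in> carrier_mat n p" using sub w(1) by (auto simp: B_submodule_def)
  obtain c where c: "c \<in> k" and indep: "rows_indep (M + c \<cdot>\<^sub>m w) (P(\<rho> := i0)) (Suc \<rho>)"
    using rows_indep_generic_combination[OF k M wc P w(2) \<rho>(2) unit _ w(3)] False \<rho> by auto
  have "c \<cdot>\<^sub>m w = (c \<cdot>\<^sub>m 1\<^sub>m n) * w" using smult_one_mult_mat[OF wc] by simp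
  moreover have "c \<cdot>\<^sub>m 1\<^sub>m n \<in> B" using B c by (simp add: k_subalgebra_def)
  ultimately have "M + c \<cdot>\<^sub>m w \<in> V" using sub MV w(1) by (simp add: B_submodule_def)
  then show ?thesis using indep w(2) by blast
qed

lemma full_B_submodule_rows_indep:
  fixes k :: "'a::division_ring set"
  assumes k: "central_subfield k" "infinite k" and n: "n \<ge> 1"
    and B: "k_subalgebra n k B" and dense: "dense_in n B"
    and V: "full_B_submodule n p B V" and \<rho>: "\<rho> \<le> n" "\<rho> \<le> p"
  shows "\<exists>v\<in>V. \<exists>P. (\<forall>s<\<rho>. P s < n) \<and> rows_indep v P \<rho>"
  using \<rho>
proof (induction \<rho>)
  case 0
  have "0\<^sub>m n p \<in> V" using V by (simp add: full_B_submodule_def B_submodule_def)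
  then show ?case by (auto simp: rows_indep_def)
next
  case (Suc \<rho>)
  then obtain v P where v: "v \<in> V" and P: "\<forall>s<\<rho>. P s < n" and indep: "rows_indep v P \<rho>" by auto
  have Vc: "V \<subseteq> carrier_mat n p" using V by (simp add: full_B_submodule_def B_submodule_def)
  have Bc: "B \<subseteq> carrier_mat n n" using B by (simp add: k_subalgebra_def)
  obtain T where T: "T \<in> carrier_mat p p" "invertible_mat T" and unit: "unit_rows (v * T) P \<rho>"
    using unit_rows_exists[OF _ P indep] v Vc by blast
  have VT: "full_B_submodule n p B ((\<lambda>X. X * T) ` V)"
    by (rule full_B_submodule_mult_invertible[OF V Bc T])
  obtain N i0 where N: "N \<in> (\<lambda>X. X * T) ` V" "i0 < n"
      and indepN: "rows_indep N (P(\<rho> := i0)) (Suc \<rho>)"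
    using full_B_submodule_rows_indep_Suc[OF k n B dense VT _ P unit] v Suc.prems by auto
  obtain v' where v': "v' \<in> V" "N = v' * T" using N(1) by blast
  have P': "\<forall>s<Suc \<rho>. (P(\<rho> := i0)) s < n" using P N(2) by simp
  have "rows_indep v' (P(\<rho> := i0)) (Suc \<rho>)"
    using rows_indep_of_mult[OF _ T(1) P'] v' Vc indepN by blast
  then show ?case using v' P' by blast
qed

section \<open>Block matrices and the normal form\<close>

lemma sum_lessThan_add:
  fixes f :: "nat \<Rightarrow> 'a::comm_monoid_add"
  shows "(\<Sum>l<n + m. f l) = (\<Sum>l<n. f l) + (\<Sum>l<m. f (n + l))"
  by (induction m) (simp_all add: add.assoc)

definition drop_cols_mat :: "nat \<Rightarrow> nat \<Rightarrow> 'a::zero_neq_one mat" where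
  "drop_cols_mat n m = mat (n + m) m (\<lambda>(l, t). if l = n + t then 1 else 0)"

lemma dim_drop_cols_mat:
  "dim_row (drop_cols_mat n m) = n + m" "dim_col (drop_cols_mat n m) = m"
  by (simp_all add: drop_cols_mat_def)

lemma drop_cols_mat_carrier [simp]: "drop_cols_mat n m \<in> carrier_mat (n + m) m"
  by (simp add: carrier_matI dim_drop_cols_mat)

lemma index_mult_drop_cols_mat:
  fixes X :: "'a::semiring_1 mat"
  assumes "X \<in> carrier_mat r (n + m)" "i < r" "t < m"
  shows "(X * drop_cols_mat n m) $$ (i, t) = X $$ (i, n + t)"
  using assms
  by (simp add: index_mult_mat_sum[of _ r "n + m" _ m] drop_cols_mat_def
      del: index_mult_mat(1) cong: if_cong)

lemma full_B_submodule_drop_cols: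
  fixes V :: "'a::division_ring mat set"
  assumes V: "full_B_submodule n (n + m) B V" and B: "B \<subseteq> carrier_mat n n"
  shows "full_B_submodule n m B ((\<lambda>X. X * drop_cols_mat n m) ` V)"
proof (rule full_B_submodule_mult_right[OF V B drop_cols_mat_carrier])
  define R :: "'a mat" where "R = mat m (n + m) (\<lambda>(t, l). if l = n + t then 1 else 0)"
  show "R \<in> carrier_mat m (n + m)" by (simp add: R_def)
  show "R * drop_cols_mat n m = 1\<^sub>m m"
  proof (rule eq_matI)
    fix i j assume "i < dim_row (1\<^sub>m m :: 'a mat)" "j < dim_col (1\<^sub>m m :: 'a mat)"
    then show "(R * drop_cols_mat n m) $$ (i, j) = 1\<^sub>m m $$ (i, j)"
      by (subst index_mult_drop_cols_mat[of R m]) (auto simp: R_def)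
  qed (simp_all add: R_def dim_drop_cols_mat)
qed

definition lower_block_mat :: "nat \<Rightarrow> 'a::zero_neq_one mat \<Rightarrow> 'a mat \<Rightarrow> 'a mat" where
  "lower_block_mat n G T = four_block_mat (1\<^sub>m n) (0\<^sub>m n (dim_col T)) G T"

lemma lower_block_mat_carrier:
  "T \<in> carrier_mat m m \<Longrightarrow> lower_block_mat n G T \<in> carrier_mat (n + m) (n + m)"
  by (simp add: lower_block_mat_def)

lemma lower_block_mat_mult:
  fixes G1 G2 T1 T2 :: "'a::semiring_1 mat"
  assumes "G1 \<in> carrier_mat m n" "G2 \<in> carrier_mat m n" "T1 \<in> carrier_mat m m"
      "T2 \<in> carrier_mat m m"
  shows "lower_block_mat n G1 T1 * lower_block_mat n G2 T2
      = lower_block_mat n (G1 + T1 * G2) (T1 * T2)"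
  using assms unfolding lower_block_mat_def
  by (subst mult_four_block_mat[of _ n n _ m _ m _ _ n _ m]) auto

lemma invertible_lower_block_mat:
  fixes G T :: "'a::ring_1 mat"
  assumes G: "G \<in> carrier_mat m n" and T: "T \<in> carrier_mat m m" "invertible_mat T"
  shows "invertible_mat (lower_block_mat n G T)"
proof -
  obtain T' where T': "T' \<in> carrier_mat m m" "T * T' = 1\<^sub>m m" "T' * T = 1\<^sub>m m"
    using invertible_mat_carrierE[OF T(2,1)] by blast
  have one: "lower_block_mat n (0\<^sub>m m n) (1\<^sub>m m) = (1\<^sub>m (n + m) :: 'a mat)"
    by (simp add: lower_block_mat_def)
  have G': "- (T' * G) \<in> carrier_mat m n" using T' G by simp
  have "G + T * (- (T' * G)) = 0\<^sub>m m n" "- (T' * G) + T' * G = 0\<^sub>m m n"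
    using G T T' by (auto simp: assoc_mult_mat[symmetric, of _ m m _ m _ n] intro!: eq_matI)
  then have "lower_block_mat n G T * lower_block_mat n (- (T' * G)) T' = 1\<^sub>m (n + m)"
    "lower_block_mat n (- (T' * G)) T' * lower_block_mat n G T = 1\<^sub>m (n + m)"
    using lower_block_mat_mult[OF G G' T(1) T'(1)] lower_block_mat_mult[OF G' G T'(1) T(1)] T' one
    by simp_all
  then show ?thesis
    using T T' lower_block_mat_carrier
    by (intro invertible_mat_carrierI[of _ "n + m" "lower_block_mat n (- (T' * G)) T'"]) auto
qed

lemma index_mult_lower_block_mat:
  fixes X :: "'a::semiring_1 mat"
  assumes X: "X \<in> carrier_mat r (n + m)" and G: "G \<in> carrier_mat m n" and T: "T \<in> carrier_mat m m"
    and i: "i < r" and t: "t < n + m"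
  shows "(X * lower_block_mat n G T) $$ (i, t) = (if t < n
    then X $$ (i, t) + (X * drop_cols_mat n m * G) $$ (i, t)
    else (X * drop_cols_mat n m * T) $$ (i, t - n))"
proof -
  have L: "lower_block_mat n G T $$ (l, t) = (if l < n then (if t = l then 1 else 0)
      else if t < n then G $$ (l - n, t) else T $$ (l - n, t - n))" if "l < n + m" for l
    using that t G T by (simp add: lower_block_mat_def)
  have "(X * lower_block_mat n G T) $$ (i, t)
      = (\<Sum>l<n. X $$ (i, l) * lower_block_mat n G T $$ (l, t))
        + (\<Sum>l<m. X $$ (i, n + l) * lower_block_mat n G T $$ (n + l, t))"
    using X T i t lower_block_mat_carrier[OF T]
    by (simp add: index_mult_mat_sum[of _ r "n + m" _ "n + m"] sum_lessThan_add
        del: index_mult_mat(1))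
  also have "(\<Sum>l<n. X $$ (i, l) * lower_block_mat n G T $$ (l, t))
      = (\<Sum>l<n. X $$ (i, l) * (if t = l then 1 else 0))"
    by (intro sum.cong) (simp_all add: L)
  also have "\<dots> = (if t < n then X $$ (i, t) else 0)" by simp
  also have "(\<Sum>l<m. X $$ (i, n + l) * lower_block_mat n G T $$ (n + l, t))
      = (\<Sum>l<m. (X * drop_cols_mat n m) $$ (i, l) *
          (if t < n then G $$ (l, t) else T $$ (l, t - n)))"
    using X i t by (intro sum.cong) (simp_all add: L index_mult_drop_cols_mat)
  also have "(if t < n then X $$ (i, t) else 0) + \<dots> = (if t < n
      then X $$ (i, t) + (X * drop_cols_mat n m * G) $$ (i, t)
      else (X * drop_cols_mat n m * T) $$ (i, t - n))"
    using X G T i t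
    by (cases "t < n") (simp_all add: index_mult_mat_sum[of _ r m] del: index_mult_mat(1))
  finally show ?thesis .
qed

lemma E_block_mult_lower_block_mat:
  fixes G T :: "'a::division_ring mat"
  assumes G: "G \<in> carrier_mat m n" and T: "T \<in> carrier_mat m m"
  shows "E_block n (n + m) 0 * lower_block_mat n G T = E_block n (n + m) 0"
proof -
  define E :: "'a mat" where "E = E_block n (n + m) 0"
  have E: "E \<in> carrier_mat n (n + m)" by (simp add: E_def E_block_def)
  have "E * drop_cols_mat n m = 0\<^sub>m n m"
  proof (rule eq_matI)
    fix i t assume "i < dim_row (0\<^sub>m n m :: 'a mat)" "t < dim_col (0\<^sub>m n m :: 'a mat)"
    then show "(E * drop_cols_mat n m) $$ (i, t) = 0\<^sub>m n m $$ (i, t)"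
      by (simp add: index_mult_drop_cols_mat[OF E]) (simp add: E_def E_block_def)
  qed (use E in \<open>auto simp: dim_drop_cols_mat\<close>)
  then have "E * lower_block_mat n G T = E"
  proof (intro eq_matI)
    fix i t assume it: "i < dim_row E" "t < dim_col E"
    have "(E * lower_block_mat n G T) $$ (i, t) = (if t < n then E $$ (i, t) else 0)"
      using G T E it \<open>E * drop_cols_mat n m = 0\<^sub>m n m\<close>
      by (simp add: index_mult_lower_block_mat[OF E])
    then show "(E * lower_block_mat n G T) $$ (i, t) = E $$ (i, t)" using it
      by (simp add: E_def E_block_def)
  qed (use E T lower_block_mat_carrier[OF T, of n G] in auto)
  then show ?thesis by (simp add: E_def)
qed

definition clearing_mat :: "nat \<Rightarrow> nat \<Rightarrow> nat \<Rightarrow> (nat \<Rightarrow> 'a::division_ring mat) \<Rightarrow> 'a mat" where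
  "clearing_mat n m q x
      = mat m n (\<lambda>(l, c). if l < q * n then - (x (l div n) $$ (l mod n, c)) else 0)"

lemma index_E_block_mult_clearing_mat:
  fixes x :: "nat \<Rightarrow> 'a::division_ring mat"
  assumes j: "j < q" and q: "q * n \<le> m" and i: "i < n" and c: "c < n"
  shows "(E_block n m j * clearing_mat n m q x) $$ (i, c) = - x j $$ (i, c)"
proof -
  have "j * n + i < Suc j * n" using i by simp
  also have "\<dots> \<le> q * n" using j by (intro mult_le_mono1) simp
  finally show ?thesis
    using q i c
    by (simp add: index_mult_mat_sum[of _ n m _ n] E_block_def clearing_mat_def
        del: index_mult_mat(1) cong: if_cong)
qed

lemma mult_lower_block_clearing_mat:
  fixes x :: "nat \<Rightarrow> 'a::division_ring mat"
  assumes x: "x j \<in> carrier_mat n (n + m)" and T: "T \<in> carrier_mat m m"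
    and xT: "x j * drop_cols_mat n m * T = E_block n m j" and j: "j < q" and q: "q * n \<le> m"
  shows "x j * lower_block_mat n (T * clearing_mat n m q x) T = E_block n (n + m) (Suc j)"
proof (rule eq_matI)
  have S: "clearing_mat n m q x \<in> carrier_mat m n" by (simp add: clearing_mat_def)
  fix i t assume "i < dim_row (E_block n (n + m) (Suc j))" "t < dim_col (E_block n (n + m) (Suc j))"
  then have i: "i < n" and t: "t < n + m" by (auto simp: E_block_def)
  have "x j * drop_cols_mat n m * (T * clearing_mat n m q x) = E_block n m j * clearing_mat n m q x"
    using x T S xT by (simp flip: assoc_mult_mat[of _ n m _ m _ n])
  then show "(x j * lower_block_mat n (T * clearing_mat n m q x) T) $$ (i, t)
      = E_block n (n + m) (Suc j) $$ (i, t)"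
    using x T S i t xT index_E_block_mult_clearing_mat[OF j q i, of t x]
    by (cases "t < n") (auto simp: index_mult_lower_block_mat E_block_def)
qed (use x T in \<open>auto simp: lower_block_mat_def E_block_def\<close>)

lemma tail_block_mult_lower_block_mat:
  fixes y :: "'a::division_ring mat"
  assumes y: "y \<in> carrier_mat n (n + m)" and G: "G \<in> carrier_mat m n" and T: "T \<in> carrier_mat m m"
    and m: "m = q * n + r"
  shows "tail_block (Suc q) r (y * lower_block_mat n G T)
      = tail_block q r (y * drop_cols_mat n m * T)"
proof (rule eq_matI)
  fix i j assume "i < dim_row (tail_block q r (y * drop_cols_mat n m * T))"
    "j < dim_col (tail_block q r (y * drop_cols_mat n m * T))"
  then have "i < n" "j < r" using y by (auto simp: tail_block_def)
  then show "tail_block (Suc q) r (y * lower_block_mat n G T) $$ (i, j)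
      = tail_block q r (y * drop_cols_mat n m * T) $$ (i, j)"
    using y G T m lower_block_mat_carrier[OF T]
    by (simp add: tail_block_def index_mult_lower_block_mat)
qed (use y T lower_block_mat_carrier[OF T] in \<open>auto simp: tail_block_def\<close>)

definition block_normal_form :: "nat \<Rightarrow> nat \<Rightarrow> 'a::division_ring mat set \<Rightarrow> bool" where
  "block_normal_form n p W \<longleftrightarrow> (\<forall>j < p div n. E_block n p j \<in> W) \<and>
     (\<exists>Y\<in>W. cols_indep (tail_block (p div n) (p mod n) Y) {0..<p mod n})"

lemma cols_indep_unit_rows:
  fixes Y :: "'a::division_ring mat"
  assumes Y: "Y \<in> carrier_mat n p" and P: "\<forall>s<p. P s < n" and unit: "unit_rows Y P p"
  shows "cols_indep Y {0..<p}"
  unfolding cols_indep_def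
proof (intro allI impI ballI)
  fix c :: "nat \<Rightarrow> 'a" and j
  assume zero: "\<forall>i<dim_row Y. (\<Sum>j\<in>{0..<p}. Y $$ (i, j) * c j) = 0" and j: "j \<in> {0..<p}"
  have "(\<Sum>j'\<in>{0..<p}. Y $$ (P j, j') * c j') = (\<Sum>j'\<in>{0..<p}. (if j' = j then 1 else 0) * c j')"
    using unit Y j by (intro sum.cong) (auto simp: unit_rows_def)
  then show "c j = 0" using zero P Y j by auto
qed

lemma block_normal_form_narrow:
  fixes k :: "'a::division_ring set"
  assumes k: "central_subfield k" "infinite k" and n: "n \<ge> 1"
    and B: "k_subalgebra n k B" and dense: "dense_in n B"
    and V: "full_B_submodule n p B V" and p: "p < n"
  shows "\<exists>T\<in>carrier_mat p p. invertible_mat T \<and> block_normal_form n p ((\<lambda>X. X * T) ` V)"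
proof -
  obtain v P where v: "v \<in> V" "\<forall>s<p. P s < n" "rows_indep v P p"
    using full_B_submodule_rows_indep[OF k n B dense V, of p] p by auto
  have vc: "v \<in> carrier_mat n p" using V v(1) by (auto simp: full_B_submodule_def B_submodule_def)
  obtain T where T: "T \<in> carrier_mat p p" "invertible_mat T" "unit_rows (v * T) P p"
    using unit_rows_exists[OF vc v(2,3)] by blast
  have "tail_block 0 p (v * T) = v * T" using vc T by (intro eq_matI) (auto simp: tail_block_def)
  moreover have "cols_indep (v * T) {0..<p}"
    by (rule cols_indep_unit_rows[of _ n]) (use vc T v(2) in auto)
  moreover have "p div n = 0" "p mod n = p" using p by auto
  ultimately have "block_normal_form n p ((\<lambda>X. X * T) ` V)"
    using v(1) unfolding block_normal_form_def by (auto intro!: bexI[of _ v])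
  then show ?thesis using T by blast
qed

lemma rows_indep_inj_on:
  fixes M :: "'a::division_ring mat"
  assumes indep: "rows_indep M P k"
  shows "inj_on P {..<k}"
proof (rule inj_onI, rule ccontr)
  fix a b assume ab: "a \<in> {..<k}" "b \<in> {..<k}" "P a = P b" "a \<noteq> b"
  define \<alpha> :: "nat \<Rightarrow> 'a" where "\<alpha> s = (if s = a then 1 else if s = b then -1 else 0)" for s
  have "(\<Sum>s<k. \<alpha> s * M $$ (P s, t)) = 0" for t
  proof -
    have "(\<Sum>s<k. \<alpha> s * M $$ (P s, t))
        = (\<Sum>s<k. (if s = a then M $$ (P a, t) else 0) - (if s = b then M $$ (P b, t) else 0))"
      using ab(4) by (intro sum.cong) (auto simp: \<alpha>_def)
    then show ?thesis using ab by (simp add: sum_subtractf)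
  qed
  then have "\<alpha> a = 0" using indep ab(1) unfolding rows_indep_def by blast
  then show False by (simp add: \<alpha>_def)
qed

lemma rows_indep_id_of_perm:
  fixes M :: "'a::division_ring mat"
  assumes indep: "rows_indep M P k" and P: "\<forall>s<k. P s < k"
  shows "rows_indep M id k"
  unfolding rows_indep_def
proof (rule allI, rule impI)
  have inj: "inj_on P {..<k}" by (rule rows_indep_inj_on[OF indep])
  then have onto: "P ` {..<k} = {..<k}" using P by (intro endo_inj_surj) auto
  fix \<alpha> assume zero: "\<forall>t<dim_col M. (\<Sum>s<k. \<alpha> s * M $$ (id s, t)) = 0"
  have "(\<Sum>s<k. (\<alpha> \<circ> P) s * M $$ (P s, t)) = (\<Sum>i<k. \<alpha> i * M $$ (i, t))" for t
    using sum.reindex[OF inj, of "\<lambda>i. \<alpha> i * M $$ (i, t)"] onto by simp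
  then have "\<forall>t<dim_col M. (\<Sum>s<k. (\<alpha> \<circ> P) s * M $$ (P s, t)) = 0" using zero by simp
  then have "\<forall>s<k. (\<alpha> \<circ> P) s = 0" using indep unfolding rows_indep_def by blast
  then show "\<forall>s<k. \<alpha> s = 0" using onto by (metis comp_apply imageE lessThan_iff)
qed

lemma full_B_submodule_first_block:
  fixes k :: "'a::division_ring set"
  assumes k: "central_subfield k" "infinite k" and n: "n \<ge> 1"
    and B: "k_subalgebra n k B" and dense: "dense_in n B"
    and V: "full_B_submodule n p B V" and np: "n \<le> p"
  shows "\<exists>T\<in>carrier_mat p p. invertible_mat T \<and> E_block n p 0 \<in> (\<lambda>X. X * T) ` V"
proof -
  obtain v P where v: "v \<in> V" "\<forall>s<n. P s < n" "rows_indep v P n"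
    using full_B_submodule_rows_indep[OF k n B dense V, of n] np by auto
  have vc: "v \<in> carrier_mat n p" using V v(1) by (auto simp: full_B_submodule_def B_submodule_def)
  obtain T where T: "T \<in> carrier_mat p p" "invertible_mat T" "unit_rows (v * T) id n"
    using unit_rows_exists[OF vc _ rows_indep_id_of_perm[OF v(3,2)]] by auto
  have "v * T = E_block n p 0" using vc T by (intro eq_matI) (auto simp: unit_rows_def E_block_def)
  then show ?thesis using T v(1) by (metis image_eqI)
qed

text \<open>The automorphism \<open>L = (I 0; T S T)\<close> fixes \<open>E\<^sub>0\<close> and maps the chosen preimages of
  \<open>E\<^sub>0, \<dots>, E\<^sub>q\<^sub>-\<^sub>1\<close> (in the last \<open>m\<close> columns) to \<open>E\<^sub>1, \<dots>, E\<^sub>q\<close>: the clearing matrix \<open>S\<close>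
  cancels their first blocks.\<close>

lemma block_normal_form_step:
  fixes V :: "'a::division_ring mat set"
  assumes n: "n \<ge> 1" and V: "V \<subseteq> carrier_mat n (n + m)" and E0: "E_block n (n + m) 0 \<in> V"
    and T: "T \<in> carrier_mat m m" "invertible_mat T"
    and nf: "block_normal_form n m ((\<lambda>X. X * T) ` (\<lambda>X. X * drop_cols_mat n m) ` V)"
  shows "\<exists>L\<in>carrier_mat (n + m) (n + m). invertible_mat L
      \<and> block_normal_form n (n + m) ((\<lambda>X. X * L) ` V)"
proof -
  define q where "q = m div n"
  define r where "r = m mod n"
  have div: "(n + m) div n = Suc q" "(n + m) mod n = r" using n by (simp_all add: q_def r_def)
  have m: "m = q * n + r" "q * n \<le> m" by (simp_all add: q_def r_def)
  have "\<forall>j\<in>{..<q}. \<exists>y. y \<in> V \<and> y * drop_cols_mat n m * T = E_block n m j"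
    using nf by (force simp: block_normal_form_def q_def)
  then obtain x where x: "\<And>j. j < q \<Longrightarrow> x j \<in> V \<and> x j * drop_cols_mat n m * T = E_block n m j"
    using bchoice[of "{..<q}"] by (metis lessThan_iff)
  define L where "L = lower_block_mat n (T * clearing_mat n m q x) T"
  have G: "T * clearing_mat n m q x \<in> carrier_mat m n" using T by (simp add: clearing_mat_def)
  have L: "L \<in> carrier_mat (n + m) (n + m)" "invertible_mat L"
    unfolding L_def using lower_block_mat_carrier T invertible_lower_block_mat[OF G T] by auto
  have E: "E_block n (n + m) j \<in> (\<lambda>X. X * L) ` V" if "j < Suc q" for j
  proof (cases j)
    case 0
    then show ?thesis using E0 E_block_mult_lower_block_mat[OF G T(1)] by (force simp: L_def)
  next
    case (Suc j')
    then have "x j' * L = E_block n (n + m) j" "x j' \<in> V"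
      using x[of j'] that V m(2) mult_lower_block_clearing_mat[OF _ T(1)] by (auto simp: L_def)
    then show ?thesis by (metis image_eqI)
  qed
  obtain y where y: "y \<in> V" "cols_indep (tail_block q r (y * drop_cols_mat n m * T)) {0..<r}"
    using nf by (auto simp: block_normal_form_def q_def r_def)
  have "tail_block (Suc q) r (y * L) = tail_block q r (y * drop_cols_mat n m * T)"
    unfolding L_def using y(1) V tail_block_mult_lower_block_mat[OF _ G T(1) m(1)] by auto
  then have "\<exists>Y\<in>(\<lambda>X. X * L) ` V. cols_indep (tail_block (Suc q) r Y) {0..<r}"
    using y by (auto intro!: bexI[of _ y])
  then have "block_normal_form n (n + m) ((\<lambda>X. X * L) ` V)"
    unfolding block_normal_form_def div using E by blast
  then show ?thesis using L by blast
qed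

lemma full_B_submodule_block_normal_form:
  fixes k :: "'a::division_ring set"
  assumes k: "central_subfield k" "infinite k" and n: "n \<ge> 1"
    and B: "k_subalgebra n k B" and dense: "dense_in n B"
  shows "full_B_submodule n p B V \<Longrightarrow>
    \<exists>T\<in>carrier_mat p p. invertible_mat T \<and> block_normal_form n p ((\<lambda>X. X * T) ` V)"
proof (induction p arbitrary: V rule: less_induct)
  case (less p)
  show ?case
  proof (cases "p < n")
    case True
    then show ?thesis using block_normal_form_narrow[OF k n B dense less.prems] by blast
  next
    case False
    then obtain m where p: "p = n + m" using le_Suc_ex not_less by blast
    have Bc: "B \<subseteq> carrier_mat n n" using B by (simp add: k_subalgebra_def)
    obtain T1 where T1: "T1 \<in> carrier_mat p p" "invertible_mat T1"
        "E_block n p 0 \<in> (\<lambda>X. X * T1) ` V"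
      using full_B_submodule_first_block[OF k n B dense less.prems] False by auto
    define V1 where "V1 = (\<lambda>X. X * T1) ` V"
    have V1: "full_B_submodule n (n + m) B V1"
      using full_B_submodule_mult_invertible[OF less.prems Bc T1(1,2)] by (simp add: V1_def p)
    then have "full_B_submodule n m B ((\<lambda>X. X * drop_cols_mat n m) ` V1)"
      by (rule full_B_submodule_drop_cols[OF _ Bc])
    then obtain T' where T': "T' \<in> carrier_mat m m" "invertible_mat T'"
      and nf: "block_normal_form n m ((\<lambda>X. X * T') ` (\<lambda>X. X * drop_cols_mat n m) ` V1)"
      using less.IH[of m] p n by auto
    have V1c: "V1 \<subseteq> carrier_mat n (n + m)" using V1
      by (simp add: full_B_submodule_def B_submodule_def)
    obtain L where L: "L \<in> carrier_mat p p" "invertible_mat L"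
        and nfL: "block_normal_form n p ((\<lambda>X. X * L) ` V1)"
      using block_normal_form_step[OF n V1c _ T' nf] T1(3) p by (auto simp: V1_def)
    have "(\<lambda>X. X * (T1 * L)) ` V = (\<lambda>X. X * L) ` V1"
      using less.prems T1(1) L(1) unfolding V1_def image_image full_B_submodule_def B_submodule_def
      by (intro image_cong refl) (auto simp: assoc_mult_mat[of _ n p _ p _ p])
    then show ?thesis using T1 L nfL by (metis invertible_mat_mult_carrier mult_carrier_mat)
  qed
qed

lemma A_module_aut_mult_invertible:
  fixes T :: "'a::division_ring mat"
  assumes T: "T \<in> carrier_mat m m" "invertible_mat T"
  shows "A_module_aut n m (\<lambda>X. X * T)"
proof -
  obtain T' where T': "T' \<in> carrier_mat m m" "T * T' = 1\<^sub>m m" "T' * T = 1\<^sub>m m"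
    using invertible_mat_carrierE[OF T(2,1)] by blast
  have "bij_betw (\<lambda>X. X * T) (carrier_mat n m) (carrier_mat n m)"
    by (rule bij_betw_byWitness[where f' = "\<lambda>X. X * T'"])
       (use T T' in \<open>auto simp: assoc_mult_mat[of _ n m _ m _ m]\<close>)
  then show ?thesis
    unfolding A_module_aut_def using T
    by (auto simp: add_mult_distrib_mat assoc_mult_mat[of _ n n _ m _ m])
qed

lemma mat_rank_eq_if_cols_indep:
  assumes "dim_col M = r" "cols_indep M {0..<r}"
  shows "mat_rank M = r"
  unfolding mat_rank_def
proof (rule Max_eqI)
  show "finite {card S |S. S \<subseteq> {0..<dim_col M} \<and> cols_indep M S}"
    by (rule finite_subset[of _ "card ` Pow {0..<dim_col M}"]) auto
  show "r \<in> {card S |S. S \<subseteq> {0..<dim_col M} \<and> cols_indep M S}"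
    using assms by force
qed (use assms in \<open>auto dest: card_mono[rotated]\<close>)

theorem lemma1p2:
  fixes k :: "'a::division_ring set"
    and n m :: nat
    and B V :: "'a mat set"
  assumes "central_subfield k" and "infinite k"
    and "n \<ge> 1"
    and "k_subalgebra n k B" and "dense_in n B"
    and "m \<ge> 1"
    and "B_submodule n m B V"
    and "A_span n m V = carrier_mat n m"
  shows "\<exists>\<sigma>. A_module_aut n m \<sigma> \<and>
           (\<forall>j < m div n. E_block n m j \<in> \<sigma> ` V) \<and>
           (\<exists>Y \<in> \<sigma> ` V. mat_rank (tail_block (m div n) (m mod n) Y) = m mod n)"
proof -
  have "full_B_submodule n m B V" using assms(7,8) by (simp add: full_B_submodule_def)
  then obtain T where T: "T \<in> carrier_mat m m" "invertible_mat T"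
    and nf: "block_normal_form n m ((\<lambda>X. X * T) ` V)"
    using full_B_submodule_block_normal_form[OF assms(1-5)] by blast
  have "mat_rank (tail_block (m div n) (m mod n) Y) = m mod n"
    if "cols_indep (tail_block (m div n) (m mod n) Y) {0..<m mod n}" for Y :: "'a mat"
    using that by (intro mat_rank_eq_if_cols_indep) (simp_all add: tail_block_def)
  then show ?thesis
    using A_module_aut_mult_invertible[OF T] nf unfolding block_normal_form_def by blast
qed

end
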